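(* Let $n\neq1$, $p\neq0$, $b\neq0$ (so equation (A) is multi-dimensional, hyperbolic and quasilinear). Consider the vector fields $\hat X_1=\partial_t$; $\hat X_2=t\partial_t+r\partial_r$; $\hat X_3=\tfrac12pbr\,\partial_r+(bu+pc)\partial_u$; $\hat X_4=(a+b+(1-p)c)r^{3-n}\partial_r+(2-n)r^{2-n}\big((b+(1-p)c)u+pc\big)\partial_u$; $\hat X_5=\tfrac12pbr\ln r\,\partial_r+(1+\ln r)(bu+pc)\partial_u$; $\hat X_6=t^2\partial_t+tu\partial_u$. Then the Lie algebra of point symmetries of (A) is spanned by $\hat X_1,\hat X_2$ together with: $\hat X_3$ iff $c(p-1)=0$; $\hat X_4$ iff $c(p-1)=0$, $n\neq2$ and $(a+b+(1-p)c)(n-3)=bp(n/2-1)$; $\hat X_5$ iff $c(p-1)=0$, $n=2$ and $a=-b$; $\hat X_6$ iff $c=0$ and $p=-4$. In particular, if $c\neq0$ and $p\neq1$ the algebra is 2-dimensional, spanned by $\hat X_1,\hat X_2$. Whenever the relevant generators are present, their commutators are $[\hat X_1,\hat X_2]=\hat X_1$, $[\hat X_1,\hat X_3]=[\hat X_2,\hat X_3]=0$, $[\hat X_1,\hat X_4]=0$, $[\hat X_2,\hat X_4]=(2-n)\hat X_4$, $[\hat X_3,\hat X_4]=p(1-n/2)b\,\hat X_4$, $[\hat X_1,\hat X_5]=0$, $[\hat X_2,\hat X_5]=\hat X_3$, $[\hat X_3,\hat X_5]=\tfrac{pb}{2}\hat X_3$, $[\hat X_1,\hat X_6]=2\hat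 X_2+\tfrac1b\hat X_3$, $[\hat X_2,\hat X_6]=\hat X_6$, $[\hat X_3,\hat X_6]=[\hat X_4,\hat X_6]=[\hat X_5,\hat X_6]=0$.
   Context: Equation (A) is $u_{tt}=(c+bu^{p})\big(u_{rr}+\frac{n-1}{r}u_{r}\big)+au^{p-1}u_{r}^{2}$ for $u(t,r)$, $r>0$, $u>0$, with real constants $a,b,c$, $p\neq0$ and real $n$. A point symmetry is a vector field $\hat X=\tau(t,r,u)\partial_t+\xi(t,r,u)\partial_r+\eta(t,r,u)\partial_u$ whose prolongation leaves the equation invariant; equivalently, $P=\eta-\tau u_t-\xi u_r$ satisfies the linearized (Fréchet derivative) equation of (A) on all solutions. Point symmetries form a Lie algebra under the vector field commutator $[\hat X,\hat Y]=\hat X\hat Y-\hat Y\hat X$. *)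

theory Defs
  imports "HOL-Analysis.Analysis"
begin

text \<open>Points (t, r, u) of the space of independent and dependent variables.
  A vector field tau d_t + xi d_r + eta d_u is represented by the map
  x \<mapsto> (tau x, xi x, eta x).\<close>

type_synonym pt = "real \<times> real \<times> real"
type_synonym vf = "pt \<Rightarrow> real \<times> real \<times> real"

definition Omega :: "pt set" where
  "Omega = {(t, r, u). 0 < r \<and> 0 < u}"

definition Dt :: "(pt \<Rightarrow> real) \<Rightarrow> pt \<Rightarrow> real" where
  "Dt f x = frechet_derivative f (at x) (1, 0, 0)"
definition Dr :: "(pt \<Rightarrow> real) \<Rightarrow> pt \<Rightarrow> real" where
  "Dr f x = frechet_derivative f (at x) (0, 1, 0)"
definition Du :: "(pt \<Rightarrow> real) \<Rightarrow> pt \<Rightarrow> real" where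
  "Du f x = frechet_derivative f (at x) (0, 0, 1)"

fun Ck :: "nat \<Rightarrow> pt set \<Rightarrow> (pt \<Rightarrow> real) \<Rightarrow> bool" where
  "Ck 0 S f = continuous_on S f"
| "Ck (Suc k) S f = ((\<forall>x\<in>S. f differentiable (at x)) \<and>
      Ck k S (Dt f) \<and> Ck k S (Dr f) \<and> Ck k S (Du f))"

definition smooth_on :: "pt set \<Rightarrow> (pt \<Rightarrow> real) \<Rightarrow> bool" where
  "smooth_on S f = (\<forall>k. Ck k S f)"

definition vt :: "vf \<Rightarrow> pt \<Rightarrow> real" where "vt X = (\<lambda>x. fst (X x))"
definition vr :: "vf \<Rightarrow> pt \<Rightarrow> real" where "vr X = (\<lambda>x. fst (snd (X x)))"
definition vu :: "vf \<Rightarrow> pt \<Rightarrow> real" where "vu X = (\<lambda>x. snd (snd (X x)))"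

definition act :: "vf \<Rightarrow> (pt \<Rightarrow> real) \<Rightarrow> pt \<Rightarrow> real" where
  "act X f x = vt X x * Dt f x + vr X x * Dr f x + vu X x * Du f x"

definition bracket :: "vf \<Rightarrow> vf \<Rightarrow> vf" where
  "bracket X Y x =
     (act X (vt Y) x - act Y (vt X) x,
      act X (vr Y) x - act Y (vr X) x,
      act X (vu Y) x - act Y (vu X) x)"

text \<open>Prolongation coefficients (standard formulas, Olver) at the jet point
  (x, u_t, u_r, u_tt, u_tr, u_rr), with x = (t, r, u).\<close>
definition eta_r :: "vf \<Rightarrow> pt \<Rightarrow> real \<Rightarrow> real \<Rightarrow> real" where
  "eta_r X x ut ur =
    (let \<tau> = vt X; \<xi> = vr X; \<eta> = vu X in
      Dr \<eta> x + ur * Du \<eta> x - ut * (Dr \<tau> x + ur * Du \<tau> x) - ur * (Dr \<xi> x + ur * Du \<xi> x))"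

definition eta_tt :: "vf \<Rightarrow> pt \<Rightarrow> real \<Rightarrow> real \<Rightarrow> real \<Rightarrow> real \<Rightarrow> real" where
  "eta_tt X x ut ur utt utr =
    (let \<tau> = vt X; \<xi> = vr X; \<eta> = vu X in
      Dt (Dt \<eta>) x + (2 * Dt (Du \<eta>) x - Dt (Dt \<tau>) x) * ut - Dt (Dt \<xi>) x * ur
      + (Du (Du \<eta>) x - 2 * Dt (Du \<tau>) x) * ut^2 - 2 * Dt (Du \<xi>) x * ut * ur
      - Du (Du \<tau>) x * ut^3 - Du (Du \<xi>) x * ut^2 * ur
      + (Du \<eta> x - 2 * Dt \<tau> x) * utt - 2 * Dt \<xi> x * utr
      - 3 * Du \<tau> x * ut * utt - Du \<xi> x * ur * utt - 2 * Du \<xi> x * ut * utr)"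

definition eta_rr :: "vf \<Rightarrow> pt \<Rightarrow> real \<Rightarrow> real \<Rightarrow> real \<Rightarrow> real \<Rightarrow> real" where
  "eta_rr X x ut ur utr urr =
    (let \<tau> = vt X; \<xi> = vr X; \<eta> = vu X in
      Dr (Dr \<eta>) x + (2 * Dr (Du \<eta>) x - Dr (Dr \<xi>) x) * ur - Dr (Dr \<tau>) x * ut
      + (Du (Du \<eta>) x - 2 * Dr (Du \<xi>) x) * ur^2 - 2 * Dr (Du \<tau>) x * ur * ut
      - Du (Du \<xi>) x * ur^3 - Du (Du \<tau>) x * ur^2 * ut
      + (Du \<eta> x - 2 * Dr \<xi> x) * urr - 2 * Dr \<tau> x * utr
      - 3 * Du \<xi> x * ur * urr - Du \<tau> x * ut * urr - 2 * Du \<tau> x * ur * utr)"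

definition DeltaA :: "real \<Rightarrow> real \<Rightarrow> real \<Rightarrow> real \<Rightarrow> real \<Rightarrow> real \<Rightarrow> real \<Rightarrow> real \<Rightarrow> real \<Rightarrow> real \<Rightarrow> real" where
  "DeltaA a b c p n r u ur utt urr =
     utt - (c + b * u powr p) * (urr + (n - 1) / r * ur) - a * u powr (p - 1) * ur^2"

text \<open>pr^(2) X applied to Delta:  xi Delta_r + eta Delta_u + eta^r Delta_{u_r}
  + eta^tt Delta_{u_tt} + eta^rr Delta_{u_rr}  (the other partials of Delta vanish).\<close>
definition prX_DeltaA :: "real \<Rightarrow> real \<Rightarrow> real \<Rightarrow> real \<Rightarrow> real \<Rightarrow> vf \<Rightarrow> pt \<Rightarrow>
    real \<Rightarrow> real \<Rightarrow> real \<Rightarrow> real \<Rightarrow> real \<Rightarrow> real" where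
  "prX_DeltaA a b c p n X x ut ur utt utr urr =
    (let r = fst (snd x); u = snd (snd x) in
      vr X x * ((c + b * u powr p) * (n - 1) / r^2 * ur)
      + vu X x * (- b * p * u powr (p - 1) * (urr + (n - 1) / r * ur)
                  - a * (p - 1) * u powr (p - 2) * ur^2)
      + eta_r X x ut ur * (- (c + b * u powr p) * (n - 1) / r - 2 * a * u powr (p - 1) * ur)
      + eta_tt X x ut ur utt utr
      - (c + b * u powr p) * eta_rr X x ut ur utr urr)"

definition is_point_symmetry :: "real \<Rightarrow> real \<Rightarrow> real \<Rightarrow> real \<Rightarrow> real \<Rightarrow> vf \<Rightarrow> bool" where
  "is_point_symmetry a b c p n X \<longleftrightarrow>
     smooth_on Omega (vt X) \<and> smooth_on Omega (vr X) \<and> smooth_on Omega (vu X) \<and>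
     (\<forall>t r u ut ur utt utr urr. 0 < r \<longrightarrow> 0 < u \<longrightarrow>
        DeltaA a b c p n r u ur utt urr = 0 \<longrightarrow>
        prX_DeltaA a b c p n X (t, r, u) ut ur utt utr urr = 0)"

definition X1 :: vf where "X1 = (\<lambda>(t, r, u). (1, 0, 0))"
definition X2 :: vf where "X2 = (\<lambda>(t, r, u). (t, r, 0))"
definition X3 :: "real \<Rightarrow> real \<Rightarrow> real \<Rightarrow> vf" where
  "X3 b c p = (\<lambda>(t, r, u). (0, p * b * r / 2, b * u + p * c))"
definition X4 :: "real \<Rightarrow> real \<Rightarrow> real \<Rightarrow> real \<Rightarrow> real \<Rightarrow> vf" where
  "X4 a b c p n = (\<lambda>(t, r, u). (0, (a + b + (1 - p) * c) * r powr (3 - n),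
      (2 - n) * r powr (2 - n) * ((b + (1 - p) * c) * u + p * c)))"
definition X5 :: "real \<Rightarrow> real \<Rightarrow> real \<Rightarrow> vf" where
  "X5 b c p = (\<lambda>(t, r, u). (0, p * b * r * ln r / 2, (1 + ln r) * (b * u + p * c)))"
definition X6 :: vf where "X6 = (\<lambda>(t, r, u). (t^2, 0, t * u))"

definition cond3 :: "real \<Rightarrow> real \<Rightarrow> bool" where
  "cond3 c p \<longleftrightarrow> c * (p - 1) = 0"
definition cond4 :: "real \<Rightarrow> real \<Rightarrow> real \<Rightarrow> real \<Rightarrow> real \<Rightarrow> bool" where
  "cond4 a b c p n \<longleftrightarrow> c * (p - 1) = 0 \<and> n \<noteq> 2 \<and>
      (a + b + (1 - p) * c) * (n - 3) = b * p * (n / 2 - 1)"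
definition cond5 :: "real \<Rightarrow> real \<Rightarrow> real \<Rightarrow> real \<Rightarrow> real \<Rightarrow> bool" where
  "cond5 a b c p n \<longleftrightarrow> c * (p - 1) = 0 \<and> n = 2 \<and> a = - b"
definition cond6 :: "real \<Rightarrow> real \<Rightarrow> bool" where
  "cond6 c p \<longleftrightarrow> c = 0 \<and> p = - 4"

end

theory Submission
  imports Defs
begin

(* Once u_tt is eliminated with the equation, the invariance condition is a polynomial in the
   jet variables u_t, u_r, u_tr, u_rr whose coefficients must vanish. The u_tr terms give
   tau = tau(t) and xi = xi(r), because c + b u^p is injective in u; the u_rr term then fixes
   eta = (xi_r - tau_t) h(u) for an explicit profile h. If c (1 - p) <> 0, the u_t^2 term forces
   xi_r = tau_t = const, leaving only X1 and X2. If c (1 - p) = 0, h is affine in u, tau is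
   quadratic in t with a t^2 term only for p = -4 (X6), and xi solves an Euler equation whose
   solutions r, r^(3 - n) and r ln r give X3, X4 (under the stated relation) and X5 (n = 2,
   a = -b). Conversely the admissible combinations satisfy all determining equations. The
   commutators follow from [X, Y] = DY X - DX Y. *)

section \<open>Calculus on the domain\<close>

lemma open_Omega: "open Omega"
proof -
  have "Omega = {x. 0 < fst (snd x)} \<inter> {x. 0 < snd (snd x)}"
    unfolding Omega_def by auto
  also have "open \<dots>"
    by (intro open_Int open_Collect_less continuous_intros)
  finally show ?thesis .
qed

lemma mem_Omega [simp]: "(t, r, u) \<in> Omega \<longleftrightarrow> 0 < r \<and> 0 < u"
  unfolding Omega_def by auto

lemma ball_OmegaI: "(\<And>t r u. 0 < r \<Longrightarrow> 0 < u \<Longrightarrow> P (t, r, u)) \<Longrightarrow> \<forall>y\<in>Omega. P y"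
  unfolding Omega_def by auto

lemma partials_of_has_derivative:
  assumes "(f has_derivative f') (at x)"
  shows "Dt f x = f' (1, 0, 0)" "Dr f x = f' (0, 1, 0)" "Du f x = f' (0, 0, 1)"
  using frechet_derivative_at[OF assms] unfolding Dt_def Dr_def Du_def by auto

lemma has_derivative_cong_Omega:
  assumes "x \<in> Omega" "\<forall>y\<in>Omega. f y = g y"
  shows "(f has_derivative f') (at x) \<longleftrightarrow> (g has_derivative f') (at x)"
  using has_derivative_transform_within_open[OF _ open_Omega, of f f' x UNIV g]
    has_derivative_transform_within_open[OF _ open_Omega, of g f' x UNIV f] assms
  by auto

lemma partials_cong_Omega:
  assumes "x \<in> Omega" "\<forall>y\<in>Omega. f y = g y"
  shows "Dt f x = Dt g x" "Dr f x = Dr g x" "Du f x = Du g x"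
  using has_derivative_cong_Omega[OF assms]
  unfolding Dt_def Dr_def Du_def frechet_derivative_def by auto

lemma differentiable_cong_Omega:
  assumes "x \<in> Omega" "\<forall>y\<in>Omega. f y = g y" "f differentiable (at x)"
  shows "g differentiable (at x)"
  using assms has_derivative_cong_Omega unfolding differentiable_def by blast

lemma partials_zero_Omega:
  assumes "\<forall>y\<in>Omega. f y = 0" "x \<in> Omega"
  shows "Dt f x = 0" "Dr f x = 0" "Du f x = 0"
  using partials_cong_Omega[OF assms(2), of "\<lambda>y. 0" f] assms(1)
    partials_of_has_derivative[OF has_derivative_const]
  by auto

lemma smooth_on_differentiable: "smooth_on Omega f \<Longrightarrow> x \<in> Omega \<Longrightarrow> f differentiable (at x)"
  unfolding smooth_on_def by (metis Ck.simps(2))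

lemma smooth_on_partials:
  assumes "smooth_on Omega f"
  shows "smooth_on Omega (Dt f)" "smooth_on Omega (Dr f)" "smooth_on Omega (Du f)"
  using assms unfolding smooth_on_def by (metis Ck.simps(2))+

lemma smooth_on_continuous: "smooth_on Omega f \<Longrightarrow> continuous_on Omega f"
  unfolding smooth_on_def by (metis Ck.simps(1))

inductive elementary :: "(pt \<Rightarrow> real) \<Rightarrow> bool" where
  elementary_const: "elementary (\<lambda>x. k)"
| elementary_t: "elementary (\<lambda>x. fst x)"
| elementary_r: "elementary (\<lambda>x. fst (snd x))"
| elementary_u: "elementary (\<lambda>x. snd (snd x))"
| elementary_add: "elementary f \<Longrightarrow> elementary g \<Longrightarrow> elementary (\<lambda>x. f x + g x)"
| elementary_mult: "elementary f \<Longrightarrow> elementary g \<Longrightarrow> elementary (\<lambda>x. f x * g x)"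
| elementary_powr: "elementary (\<lambda>x. fst (snd x) powr s)"
| elementary_ln: "elementary (\<lambda>x. ln (fst (snd x)))"
| elementary_cong: "elementary f \<Longrightarrow> \<forall>x\<in>Omega. f x = g x \<Longrightarrow> elementary g"

lemma elementary_partialsI:
  assumes "\<And>x. x \<in> Omega \<Longrightarrow> (f has_derivative F x) (at x)"
    and "elementary ft" "elementary fr" "elementary fu"
    and "\<And>x. x \<in> Omega \<Longrightarrow> ft x = F x (1, 0, 0)" "\<And>x. x \<in> Omega \<Longrightarrow> fr x = F x (0, 1, 0)"
      "\<And>x. x \<in> Omega \<Longrightarrow> fu x = F x (0, 0, 1)"
  shows "(\<forall>x\<in>Omega. f differentiable (at x)) \<and>
    elementary (Dt f) \<and> elementary (Dr f) \<and> elementary (Du f)"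
proof -
  have "\<forall>x\<in>Omega. ft x = Dt f x" "\<forall>x\<in>Omega. fr x = Dr f x" "\<forall>x\<in>Omega. fu x = Du f x"
    using assms(1,5-7) partials_of_has_derivative by metis+
  then show ?thesis
    using assms(1) elementary_cong[OF assms(2)] elementary_cong[OF assms(3)]
      elementary_cong[OF assms(4)]
    by (blast intro: differentiableI)
qed

lemma elementary_partials:
  "elementary f \<Longrightarrow> (\<forall>x\<in>Omega. f differentiable (at x)) \<and>
    elementary (Dt f) \<and> elementary (Dr f) \<and> elementary (Du f)"
proof (induction rule: elementary.induct)
  case (elementary_const k)
  show ?case
    by (rule elementary_partialsI[where F="\<lambda>x h. 0"]) (auto intro: elementary.elementary_const)
next
  case elementary_t
  show ?case
    by (rule elementary_partialsI[where F="\<lambda>x h. fst h"])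
      (auto intro!: derivative_eq_intros intro: elementary.elementary_const)
next
  case elementary_r
  show ?case
    by (rule elementary_partialsI[where F="\<lambda>x h. fst (snd h)"])
      (auto intro!: derivative_eq_intros intro: elementary.elementary_const)
next
  case elementary_u
  show ?case
    by (rule elementary_partialsI[where F="\<lambda>x h. snd (snd h)"])
      (auto intro!: derivative_eq_intros intro: elementary.elementary_const)
next
  case (elementary_add f g)
  show ?case
  proof (rule elementary_partialsI
      [where F="\<lambda>x h. frechet_derivative f (at x) h + frechet_derivative g (at x) h"])
    show "((\<lambda>x. f x + g x) has_derivative
        (\<lambda>h. frechet_derivative f (at x) h + frechet_derivative g (at x) h)) (at x)"
      if "x \<in> Omega" for x
      using that elementary_add.IH
      by (intro has_derivative_add frechet_derivative_works[THEN iffD1]) auto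
    show "elementary (\<lambda>x. Dt f x + Dt g x)" "elementary (\<lambda>x. Dr f x + Dr g x)"
      "elementary (\<lambda>x. Du f x + Du g x)"
      using elementary_add.IH by (auto intro!: elementary.elementary_add)
  qed (auto simp: Dt_def Dr_def Du_def)
next
  case (elementary_mult f g)
  show ?case
  proof (rule elementary_partialsI
      [where F="\<lambda>x h. f x * frechet_derivative g (at x) h + frechet_derivative f (at x) h * g x"])
    show "((\<lambda>x. f x * g x) has_derivative
        (\<lambda>h. f x * frechet_derivative g (at x) h + frechet_derivative f (at x) h * g x)) (at x)"
      if "x \<in> Omega" for x
      using that elementary_mult.IH
      by (intro has_derivative_mult frechet_derivative_works[THEN iffD1]) auto
    show "elementary (\<lambda>x. f x * Dt g x + Dt f x * g x)"
      "elementary (\<lambda>x. f x * Dr g x + Dr f x * g x)"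
      "elementary (\<lambda>x. f x * Du g x + Du f x * g x)"
      using elementary_mult by (auto intro!: elementary.elementary_add elementary.elementary_mult)
  qed (auto simp: Dt_def Dr_def Du_def)
next
  case (elementary_powr s)
  show ?case
  proof (rule elementary_partialsI[where F="\<lambda>x h. fst (snd h) * (s * fst (snd x) powr (s - 1))"
        and fr="\<lambda>x. s * fst (snd x) powr (s - 1)"])
    show "((\<lambda>x::pt. fst (snd x) powr s) has_derivative
        (\<lambda>h. fst (snd h) * (s * fst (snd x) powr (s - 1)))) (at x)"
      if "x \<in> Omega" for x
      using that unfolding Omega_def
      by (auto intro!: DERIV_compose_FDERIV[OF has_real_derivative_powr] derivative_eq_intros)
  qed (auto intro: elementary.elementary_const elementary.elementary_mult elementary.elementary_powr)
next
  case elementary_ln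
  show ?case
  proof (rule elementary_partialsI[where F="\<lambda>x h. fst (snd h) * (1 / fst (snd x))"
        and ft="\<lambda>x. 0" and fr="\<lambda>x. fst (snd x) powr (-1)" and fu="\<lambda>x. 0"])
    show "((\<lambda>x::pt. ln (fst (snd x))) has_derivative (\<lambda>h. fst (snd h) * (1 / fst (snd x)))) (at x)"
      if "x \<in> Omega" for x
      using that unfolding Omega_def
      by (auto intro!: DERIV_compose_FDERIV[OF DERIV_ln_divide] derivative_eq_intros
        simp: divide_inverse)
    show "elementary (\<lambda>x. fst (snd x) powr (-1))" by (rule elementary.elementary_powr)
  qed (auto intro: elementary.elementary_const simp: Omega_def powr_minus_divide)
next
  case (elementary_cong f g)
  then show ?case
    using partials_cong_Omega[of _ f g]
    by (auto intro: differentiable_cong_Omega elementary.elementary_cong)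
qed

lemma smooth_on_elementary: "elementary f \<Longrightarrow> smooth_on Omega f"
proof -
  have "Ck k Omega f" if "elementary f" for k
    using that
  proof (induction k arbitrary: f)
    case 0
    then show ?case
      using elementary_partials[OF 0]
      by (auto intro!: differentiable_imp_continuous_within continuous_at_imp_continuous_on)
  next
    case (Suc k)
    then show ?case using elementary_partials[OF Suc.prems] by auto
  qed
  then show "elementary f \<Longrightarrow> smooth_on Omega f" unfolding smooth_on_def by blast
qed

lemma has_real_derivative_along_line:
  assumes "f differentiable (at (P s))" "(P has_derivative (\<lambda>h. h *\<^sub>R v)) (at s)"
  shows "((\<lambda>s. f (P s)) has_real_derivative frechet_derivative f (at (P s)) v) (at s)"
proof -
  have lin: "linear (frechet_derivative f (at (P s)))"
    using assms(1) frechet_derivative_works has_derivative_linear by blast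
  have "((\<lambda>s. f (P s)) has_derivative (\<lambda>h. frechet_derivative f (at (P s)) (h *\<^sub>R v))) (at s)"
    using diff_chain_at[OF assms(2) assms(1)[unfolded frechet_derivative_works]]
    by (simp add: o_def)
  also have "(\<lambda>h. frechet_derivative f (at (P s)) (h *\<^sub>R v)) = (*) (frechet_derivative f (at (P s)) v)"
    using linear_scale[OF lin] by (auto simp: mult.commute)
  finally show ?thesis unfolding has_field_derivative_def .
qed

lemma DERIV_Dt: "f differentiable (at (t, r, u)) \<Longrightarrow>
    ((\<lambda>s. f (s, r, u)) has_real_derivative Dt f (t, r, u)) (at t)"
  unfolding Dt_def
  by (rule has_real_derivative_along_line[where P="\<lambda>s. (s, r, u)", simplified])
    (auto intro!: derivative_eq_intros simp: zero_prod_def)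

lemma DERIV_Dr: "f differentiable (at (t, r, u)) \<Longrightarrow>
    ((\<lambda>s. f (t, s, u)) has_real_derivative Dr f (t, r, u)) (at r)"
  unfolding Dr_def
  by (rule has_real_derivative_along_line[where P="\<lambda>s. (t, s, u)", simplified])
    (auto intro!: derivative_eq_intros simp: zero_prod_def)

lemma DERIV_Du: "f differentiable (at (t, r, u)) \<Longrightarrow>
    ((\<lambda>s. f (t, r, s)) has_real_derivative Du f (t, r, u)) (at u)"
  unfolding Du_def
  by (rule has_real_derivative_along_line[where P="\<lambda>s. (t, r, s)", simplified])
    (auto intro!: derivative_eq_intros simp: zero_prod_def)

lemma DERIV_zero_imp_eq_pos:
  assumes "\<And>s. 0 < s \<Longrightarrow> (f has_real_derivative 0) (at s)" "0 < x" "0 < y"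
  shows "f x = f y"
  by (rule DERIV_isconst3[of 0 "max x y + 1"]) (use assms in auto)

lemma constant_in_u:
  assumes "\<forall>x\<in>Omega. f differentiable (at x)" "\<forall>x\<in>Omega. Du f x = 0" "0 < r" "0 < u" "0 < v"
  shows "f (t, r, u) = f (t, r, v)"
proof (rule DERIV_zero_imp_eq_pos[where f="\<lambda>s. f (t, r, s)"])
  show "((\<lambda>s. f (t, r, s)) has_real_derivative 0) (at s)" if "0 < s" for s
    using DERIV_Du[of f t r s] assms that by auto
qed (use assms in auto)

lemma constant_in_r:
  assumes "\<forall>x\<in>Omega. f differentiable (at x)" "\<forall>x\<in>Omega. Dr f x = 0" "0 < r" "0 < r'" "0 < u"
  shows "f (t, r, u) = f (t, r', u)"
proof (rule DERIV_zero_imp_eq_pos[where f="\<lambda>s. f (t, s, u)"])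
  show "((\<lambda>s. f (t, s, u)) has_real_derivative 0) (at s)" if "0 < s" for s
    using DERIV_Dr[of f t s u] assms that by auto
qed (use assms in auto)

lemma constant_in_t:
  assumes "\<forall>x\<in>Omega. f differentiable (at x)" "\<forall>x\<in>Omega. Dt f x = 0" "0 < r" "0 < u"
  shows "f (t, r, u) = f (t', r, u)"
  using DERIV_isconst_all[of "\<lambda>s. f (s, r, u)"] DERIV_Dt[of f _ r u] assms by auto

lemma partials_of_u_independent:
  assumes "\<forall>y\<in>Omega. f y = f (fst y, fst (snd y), 1)" "\<forall>y\<in>Omega. f differentiable (at y)"
    "0 < r" "0 < u"
  shows "Dt f (t, r, u) = Dt f (t, r, 1)" "Dr f (t, r, u) = Dr f (t, r, 1)"
proof -
  let ?P = "\<lambda>y::pt. (fst y, fst (snd y), 1::real)"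
  have "(?P has_derivative (\<lambda>h. (fst h, fst (snd h), 0))) (at (t, r, u))"
    by (auto intro!: derivative_eq_intros simp: zero_prod_def)
  moreover have "f differentiable (at (?P (t, r, u)))" using assms by simp
  ultimately have "((\<lambda>y. f (?P y)) has_derivative
      (\<lambda>h. frechet_derivative f (at (t, r, 1)) (fst h, fst (snd h), 0))) (at (t, r, u))"
    using diff_chain_at frechet_derivative_works by (fastforce simp: o_def)
  moreover have "Dt f (t, r, u) = Dt (\<lambda>y. f (?P y)) (t, r, u)"
    "Dr f (t, r, u) = Dr (\<lambda>y. f (?P y)) (t, r, u)"
    using partials_cong_Omega[of "(t, r, u)" f "\<lambda>y. f (?P y)"] assms by auto
  ultimately show "Dt f (t, r, u) = Dt f (t, r, 1)" "Dr f (t, r, u) = Dr f (t, r, 1)"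
    using partials_of_has_derivative by (auto simp: Dt_def Dr_def)
qed

lemma partials_of_t_function:
  assumes "\<forall>y\<in>Omega. f y = T (fst y)" "\<And>s. (T has_real_derivative T' s) (at s)" "x \<in> Omega"
  shows "Dt f x = T' (fst x)" "Dr f x = 0" "Du f x = 0"
proof -
  have "((\<lambda>y. T (fst y)) has_derivative (\<lambda>h. fst h * T' (fst x))) (at x)"
    by (rule DERIV_compose_FDERIV[OF assms(2)]) (auto intro!: derivative_eq_intros)
  then show "Dt f x = T' (fst x)" "Dr f x = 0" "Du f x = 0"
    using partials_cong_Omega[OF assms(3), of "\<lambda>y. T (fst y)" f] assms(1)
      partials_of_has_derivative
    by auto
qed

lemma partials_of_r_function:
  assumes "\<forall>y\<in>Omega. f y = Q (fst (snd y))" "\<And>s. 0 < s \<Longrightarrow> (Q has_real_derivative Q' s) (at s)"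
    "x \<in> Omega"
  shows "Dt f x = 0" "Dr f x = Q' (fst (snd x))" "Du f x = 0"
proof -
  have "0 < fst (snd x)" using assms(3) unfolding Omega_def by auto
  then have "((\<lambda>y. Q (fst (snd y))) has_derivative (\<lambda>h. fst (snd h) * Q' (fst (snd x)))) (at x)"
    by (intro DERIV_compose_FDERIV[OF assms(2)]) (auto intro!: derivative_eq_intros)
  then show "Dt f x = 0" "Dr f x = Q' (fst (snd x))" "Du f x = 0"
    using partials_cong_Omega[OF assms(3), of "\<lambda>y. Q (fst (snd y))" f] assms(1)
      partials_of_has_derivative
    by auto
qed

lemma partials_of_separated:
  assumes "\<forall>y\<in>Omega. f y = (A (fst (snd y)) - B (fst y)) * H (snd (snd y))"
    "\<And>s. 0 < s \<Longrightarrow> (A has_real_derivative A' s) (at s)"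
    "\<And>s. (B has_real_derivative B' s) (at s)"
    "\<And>s. 0 < s \<Longrightarrow> (H has_real_derivative H' s) (at s)" "x \<in> Omega"
  shows "Dt f x = - B' (fst x) * H (snd (snd x))"
    "Dr f x = A' (fst (snd x)) * H (snd (snd x))"
    "Du f x = (A (fst (snd x)) - B (fst x)) * H' (snd (snd x))"
proof -
  have "0 < fst (snd x)" "0 < snd (snd x)" using assms(5) unfolding Omega_def by auto
  then have "((\<lambda>y. (A (fst (snd y)) - B (fst y)) * H (snd (snd y))) has_derivative
     (\<lambda>h. (A (fst (snd x)) - B (fst x)) * (snd (snd h) * H' (snd (snd x))) +
          (fst (snd h) * A' (fst (snd x)) - fst h * B' (fst x)) * H (snd (snd x)))) (at x)"
    by (intro has_derivative_mult has_derivative_diff DERIV_compose_FDERIV[OF assms(2)]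
        DERIV_compose_FDERIV[OF assms(3)] DERIV_compose_FDERIV[OF assms(4)])
      (auto intro!: derivative_eq_intros)
  then show "Dt f x = - B' (fst x) * H (snd (snd x))"
    "Dr f x = A' (fst (snd x)) * H (snd (snd x))"
    "Du f x = (A (fst (snd x)) - B (fst x)) * H' (snd (snd x))"
    using partials_cong_Omega[OF assms(5), of "\<lambda>y. (A (fst (snd y)) - B (fst y)) * H (snd (snd y))" f]
      assms(1) partials_of_has_derivative
    by auto
qed

section \<open>The invariance condition on solutions\<close>

definition prX_on_solutions :: "real \<Rightarrow> real \<Rightarrow> real \<Rightarrow> real \<Rightarrow> real \<Rightarrow> vf \<Rightarrow>
    real \<Rightarrow> real \<Rightarrow> real \<Rightarrow> real \<Rightarrow> real \<Rightarrow> real \<Rightarrow> real \<Rightarrow> real" where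
  "prX_on_solutions a b c p n X t r u ut ur utr urr =
     prX_DeltaA a b c p n X (t, r, u) ut ur
       ((c + b * u powr p) * (urr + (n - 1) / r * ur) + a * u powr (p - 1) * ur^2) utr urr"

lemma is_point_symmetry_iff_prX_on_solutions:
  "is_point_symmetry a b c p n X \<longleftrightarrow>
     smooth_on Omega (vt X) \<and> smooth_on Omega (vr X) \<and> smooth_on Omega (vu X) \<and>
     (\<forall>t r u ut ur utr urr. 0 < r \<longrightarrow> 0 < u \<longrightarrow> prX_on_solutions a b c p n X t r u ut ur utr urr = 0)"
  unfolding is_point_symmetry_def prX_on_solutions_def DeltaA_def by (auto simp: algebra_simps)

lemma point_symmetry_prX_on_solutions:
  assumes "is_point_symmetry a b c p n X" "0 < r" "0 < u"
  shows "prX_on_solutions a b c p n X t r u ut ur utr urr = 0"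
  using assms unfolding is_point_symmetry_iff_prX_on_solutions by blast

lemma prX_on_solutions_coeff_ut_utr:
  "prX_on_solutions a b c p n X t r u 1 0 1 0 - prX_on_solutions a b c p n X t r u 1 0 0 0
   - prX_on_solutions a b c p n X t r u 0 0 1 0 + prX_on_solutions a b c p n X t r u 0 0 0 0
   = - 2 * Du (vr X) (t, r, u)"
  unfolding prX_on_solutions_def prX_DeltaA_def eta_r_def eta_tt_def eta_rr_def Let_def
  by (simp add: algebra_simps)

lemma prX_on_solutions_coeff_ur_utr:
  "prX_on_solutions a b c p n X t r u 0 1 1 0 - prX_on_solutions a b c p n X t r u 0 1 0 0
   - prX_on_solutions a b c p n X t r u 0 0 1 0 + prX_on_solutions a b c p n X t r u 0 0 0 0
   = 2 * (c + b * u powr p) * Du (vt X) (t, r, u)"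
  unfolding prX_on_solutions_def prX_DeltaA_def eta_r_def eta_tt_def eta_rr_def Let_def
  by (simp add: algebra_simps)

lemma prX_on_solutions_coeff_utr:
  "prX_on_solutions a b c p n X t r u 0 0 1 0 - prX_on_solutions a b c p n X t r u 0 0 0 0
   = - 2 * Dt (vr X) (t, r, u) + 2 * (c + b * u powr p) * Dr (vt X) (t, r, u)"
  unfolding prX_on_solutions_def prX_DeltaA_def eta_r_def eta_tt_def eta_rr_def Let_def
  by (simp add: algebra_simps)

lemma poly_ut_ur_eq_zero_iff:
  fixes A B C D E :: real
  shows "(\<forall>ut ur. A + B * ut + C * ut^2 + D * ur + E * ur^2 = 0) \<longleftrightarrow>
    A = 0 \<and> B = 0 \<and> C = 0 \<and> D = 0 \<and> E = 0"
proof
  assume e: "\<forall>ut ur. A + B * ut + C * ut^2 + D * ur + E * ur^2 = 0"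
  have "A = 0" using e[rule_format, of 0 0] by simp
  moreover have "A + B + C = 0" "A - B + C = 0" using e[rule_format, of 1 0] e[rule_format, of "-1" 0] by simp_all
  moreover have "A + D + E = 0" "A - D + E = 0" using e[rule_format, of 0 1] e[rule_format, of 0 "-1"] by simp_all
  ultimately show "A = 0 \<and> B = 0 \<and> C = 0 \<and> D = 0 \<and> E = 0" by linarith
qed simp

text \<open>The coefficient of u_rr in the invariance condition forces
  eta = (xi_r - tau_t) * 2 (c + b u^p) / (b p u^(p - 1)); the second factor is the u-profile.\<close>

definition u_profile :: "real \<Rightarrow> real \<Rightarrow> real \<Rightarrow> real \<Rightarrow> real" where
  "u_profile b c p u = 2 * (c * u powr (1 - p) + b * u) / (b * p)"

definition u_profile' :: "real \<Rightarrow> real \<Rightarrow> real \<Rightarrow> real \<Rightarrow> real" where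
  "u_profile' b c p u = 2 * (c * (1 - p) * u powr (- p) + b) / (b * p)"

definition u_profile'' :: "real \<Rightarrow> real \<Rightarrow> real \<Rightarrow> real \<Rightarrow> real" where
  "u_profile'' b c p u = 2 * (c * (1 - p) * (- p) * u powr (- p - 1)) / (b * p)"

lemma DERIV_u_profile:
  "b \<noteq> 0 \<Longrightarrow> p \<noteq> 0 \<Longrightarrow> 0 < u \<Longrightarrow> (u_profile b c p has_real_derivative u_profile' b c p u) (at u)"
  unfolding u_profile_def[abs_def] u_profile'_def
  by (auto intro!: derivative_eq_intros simp: field_simps)

lemma DERIV_u_profile':
  "b \<noteq> 0 \<Longrightarrow> p \<noteq> 0 \<Longrightarrow> 0 < u \<Longrightarrow> (u_profile' b c p has_real_derivative u_profile'' b c p u) (at u)"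
  unfolding u_profile'_def[abs_def] u_profile''_def
  by (auto intro!: derivative_eq_intros simp: field_simps)

lemma u_profile_equation:
  assumes "0 < u" "b \<noteq> 0" "p \<noteq> 0"
  shows "b * p * u powr (p - 1) * u_profile b c p u = 2 * (c + b * u powr p)"
proof -
  have "u powr (p - 1) * u powr (1 - p) = 1" using assms by (simp add: powr_add[symmetric])
  moreover have "u powr (p - 1) * u = u powr p" using assms by (simp add: powr_diff)
  moreover have "b * p * u powr (p - 1) * u_profile b c p u
      = 2 * (c * (u powr (p - 1) * u powr (1 - p)) + b * (u powr (p - 1) * u))"
    using assms unfolding u_profile_def by (simp add: field_simps)
  ultimately show ?thesis by simp
qed

definition has_separated_form ::
    "real \<Rightarrow> real \<Rightarrow> real \<Rightarrow> vf \<Rightarrow> (real \<Rightarrow> real) \<Rightarrow> (real \<Rightarrow> real) \<Rightarrow> (real \<Rightarrow> real) \<Rightarrow> (real \<Rightarrow> real) \<Rightarrow> bool"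
  where
  "has_separated_form b c p X T0 T1 Q0 Q1 \<longleftrightarrow> (\<forall>y\<in>Omega.
     vt X y = T0 (fst y) \<and> vr X y = Q0 (fst (snd y)) \<and>
     vu X y = (Q1 (fst (snd y)) - T1 (fst y)) * u_profile b c p (snd (snd y)))"

locale separated_ansatz =
  fixes T0 T1 T2 T3 Q0 Q1 Q2 Q3 :: "real \<Rightarrow> real"
  assumes T01: "\<And>s. (T0 has_real_derivative T1 s) (at s)"
    and T12: "\<And>s. (T1 has_real_derivative T2 s) (at s)"
    and T23: "\<And>s. (T2 has_real_derivative T3 s) (at s)"
    and Q01: "\<And>s. 0 < s \<Longrightarrow> (Q0 has_real_derivative Q1 s) (at s)"
    and Q12: "\<And>s. 0 < s \<Longrightarrow> (Q1 has_real_derivative Q2 s) (at s)"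
    and Q23: "\<And>s. 0 < s \<Longrightarrow> (Q2 has_real_derivative Q3 s) (at s)"
begin

lemma partials_tau_xi:
  assumes tau: "\<forall>y\<in>Omega. vt X y = T0 (fst y)" and xi: "\<forall>y\<in>Omega. vr X y = Q0 (fst (snd y))"
    and x: "x \<in> Omega"
  shows "Dt (vt X) x = T1 (fst x)" "Dr (vt X) x = 0" "Du (vt X) x = 0"
    "Dt (vr X) x = 0" "Dr (vr X) x = Q1 (fst (snd x))" "Du (vr X) x = 0"
    "Dt (Dt (vt X)) x = T2 (fst x)" "Dr (Dr (vr X)) x = Q2 (fst (snd x))"
    "Dt (Du (vt X)) x = 0" "Dr (Du (vt X)) x = 0" "Du (Du (vt X)) x = 0" "Dr (Dr (vt X)) x = 0"
    "Dt (Du (vr X)) x = 0" "Dr (Du (vr X)) x = 0" "Du (Du (vr X)) x = 0" "Dt (Dt (vr X)) x = 0"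
proof -
  have t: "Dt (vt X) y = T1 (fst y)" "Dr (vt X) y = 0" "Du (vt X) y = 0" if "y \<in> Omega" for y
    using partials_of_t_function[of "vt X" T0 T1 y] tau T01 that by auto
  have r: "Dt (vr X) y = 0" "Dr (vr X) y = Q1 (fst (snd y))" "Du (vr X) y = 0" if "y \<in> Omega" for y
    using partials_of_r_function[of "vr X" Q0 Q1 y] xi Q01 that by auto
  have "\<forall>y\<in>Omega. Dt (vt X) y = T1 (fst y)" "\<forall>y\<in>Omega. Dr (vr X) y = Q1 (fst (snd y))"
    "\<forall>y\<in>Omega. Du (vt X) y = 0" "\<forall>y\<in>Omega. Dr (vt X) y = 0"
    "\<forall>y\<in>Omega. Du (vr X) y = 0" "\<forall>y\<in>Omega. Dt (vr X) y = 0"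
    using t r by auto
  note first = this
  show "Dt (vt X) x = T1 (fst x)" "Dr (vt X) x = 0" "Du (vt X) x = 0"
    "Dt (vr X) x = 0" "Dr (vr X) x = Q1 (fst (snd x))" "Du (vr X) x = 0"
    using t[OF x] r[OF x] by auto
  show "Dt (Dt (vt X)) x = T2 (fst x)" "Dr (Dr (vr X)) x = Q2 (fst (snd x))"
    using partials_of_t_function[of "Dt (vt X)" T1 T2 x] partials_of_r_function[of "Dr (vr X)" Q1 Q2 x]
      first T12 Q12 x by auto
  show "Dt (Du (vt X)) x = 0" "Dr (Du (vt X)) x = 0" "Du (Du (vt X)) x = 0" "Dr (Dr (vt X)) x = 0"
    "Dt (Du (vr X)) x = 0" "Dr (Du (vr X)) x = 0" "Du (Du (vr X)) x = 0" "Dt (Dt (vr X)) x = 0"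
    using partials_zero_Omega[OF first(3) x] partials_zero_Omega[OF first(4) x]
      partials_zero_Omega[OF first(5) x] partials_zero_Omega[OF first(6) x] by auto
qed

lemma prX_on_solutions_tau_xi:
  assumes tau: "\<forall>y\<in>Omega. vt X y = T0 (fst y)" and xi: "\<forall>y\<in>Omega. vr X y = Q0 (fst (snd y))"
    and r: "0 < r" and u: "0 < u"
  shows "prX_on_solutions a b c p n X t r u ut ur utr urr =
    (Dt (Dt (vu X)) (t, r, u) - (c + b * u powr p) * Dr (Dr (vu X)) (t, r, u)
       - (n - 1) / r * (c + b * u powr p) * Dr (vu X) (t, r, u))
    + (2 * Dt (Du (vu X)) (t, r, u) - T2 t) * ut
    + Du (Du (vu X)) (t, r, u) * ut^2
    + ((Q1 r - 2 * T1 t) * (c + b * u powr p) * (n - 1) / r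
       - (c + b * u powr p) * (2 * Dr (Du (vu X)) (t, r, u) - Q2 r)
       - b * p * u powr (p - 1) * (n - 1) / r * vu X (t, r, u)
       + Q0 r * (c + b * u powr p) * (n - 1) / r^2
       - 2 * a * u powr (p - 1) * Dr (vu X) (t, r, u)) * ur
    + (a * u powr (p - 1) * (2 * (Q1 r - T1 t) - Du (vu X) (t, r, u))
       - (c + b * u powr p) * Du (Du (vu X)) (t, r, u)
       - a * (p - 1) * u powr (p - 2) * vu X (t, r, u)) * ur^2
    + (2 * (c + b * u powr p) * (Q1 r - T1 t) - b * p * u powr (p - 1) * vu X (t, r, u)) * urr"
proof -
  have x: "(t, r, u) \<in> Omega" using r u by simp
  have "vr X (t, r, u) = Q0 r" using xi x by auto
  with partials_tau_xi[OF tau xi x] r show ?thesis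
    unfolding prX_on_solutions_def prX_DeltaA_def eta_r_def eta_tt_def eta_rr_def Let_def
    by (simp add: field_simps power2_eq_square)
qed

lemma partials_eta:
  assumes eta: "\<forall>y\<in>Omega. vu X y = (Q1 (fst (snd y)) - T1 (fst y)) * u_profile b c p (snd (snd y))"
    and b: "b \<noteq> 0" and p: "p \<noteq> 0" and r: "0 < r" and u: "0 < u"
  shows "Dt (vu X) (t, r, u) = - T2 t * u_profile b c p u"
    "Dr (vu X) (t, r, u) = Q2 r * u_profile b c p u"
    "Du (vu X) (t, r, u) = (Q1 r - T1 t) * u_profile' b c p u"
    "Dt (Dt (vu X)) (t, r, u) = - T3 t * u_profile b c p u"
    "Dr (Dr (vu X)) (t, r, u) = Q3 r * u_profile b c p u"
    "Dt (Du (vu X)) (t, r, u) = - T2 t * u_profile' b c p u"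
    "Dr (Du (vu X)) (t, r, u) = Q2 r * u_profile' b c p u"
    "Du (Du (vu X)) (t, r, u) = (Q1 r - T1 t) * u_profile'' b c p u"
proof -
  note h01 = DERIV_u_profile[OF b p] and h12 = DERIV_u_profile'[OF b p]
  have first: "Dt (vu X) y = (0 - T2 (fst y)) * u_profile b c p (snd (snd y))"
    "Dr (vu X) y = (Q2 (fst (snd y)) - 0) * u_profile b c p (snd (snd y))"
    "Du (vu X) y = (Q1 (fst (snd y)) - T1 (fst y)) * u_profile' b c p (snd (snd y))"
    if "y \<in> Omega" for y
    using partials_of_separated[of "vu X" Q1 T1 "u_profile b c p" Q2 T2 "u_profile' b c p" y]
      eta Q12 T12 h01 that by auto
  have x: "(t, r, u) \<in> Omega" using r u by simp
  show "Dt (vu X) (t, r, u) = - T2 t * u_profile b c p u"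
    "Dr (vu X) (t, r, u) = Q2 r * u_profile b c p u"
    "Du (vu X) (t, r, u) = (Q1 r - T1 t) * u_profile' b c p u"
    using first[OF x] by auto
  show "Dt (Dt (vu X)) (t, r, u) = - T3 t * u_profile b c p u"
    using partials_of_separated[of "Dt (vu X)" "\<lambda>_. 0" T2 "u_profile b c p" "\<lambda>_. 0" T3
        "u_profile' b c p" "(t, r, u)"] first T23 h01 x by auto
  show "Dr (Dr (vu X)) (t, r, u) = Q3 r * u_profile b c p u"
    using partials_of_separated[of "Dr (vu X)" Q2 "\<lambda>_. 0" "u_profile b c p" Q3 "\<lambda>_. 0"
        "u_profile' b c p" "(t, r, u)"] first Q23 h01 x by auto
  show "Dt (Du (vu X)) (t, r, u) = - T2 t * u_profile' b c p u"
    "Dr (Du (vu X)) (t, r, u) = Q2 r * u_profile' b c p u"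
    "Du (Du (vu X)) (t, r, u) = (Q1 r - T1 t) * u_profile'' b c p u"
    using partials_of_separated[of "Du (vu X)" Q1 T1 "u_profile' b c p" Q2 T2
        "u_profile'' b c p" "(t, r, u)"] first Q12 T12 h12 x by auto
qed

lemma prX_on_solutions_separated:
  assumes sep: "has_separated_form b c p X T0 T1 Q0 Q1"
    and b: "b \<noteq> 0" and p: "p \<noteq> 0" and r: "0 < r" and u: "0 < u"
  shows "prX_on_solutions a b c p n X t r u ut ur utr urr =
    - (u_profile b c p u * (T3 t + (c + b * u powr p) * (Q3 r + (n - 1) / r * Q2 r)))
    + - ((2 * u_profile' b c p u + 1) * T2 t) * ut
    + (Q1 r - T1 t) * u_profile'' b c p u * ut^2
    + ((c + b * u powr p) * ((n - 1) * (Q0 r / r^2 - Q1 r / r) - (2 * u_profile' b c p u - 1) * Q2 r)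
       - 2 * a * u powr (p - 1) * u_profile b c p u * Q2 r) * ur
    + (Q1 r - T1 t) * (a * u powr (p - 1) * (2 - u_profile' b c p u)
       - (c + b * u powr p) * u_profile'' b c p u
       - a * (p - 1) * u powr (p - 2) * u_profile b c p u) * ur^2"
    (is "_ = ?rhs")
proof -
  have tau: "\<forall>y\<in>Omega. vt X y = T0 (fst y)" and xi: "\<forall>y\<in>Omega. vr X y = Q0 (fst (snd y))"
    and eta: "\<forall>y\<in>Omega. vu X y = (Q1 (fst (snd y)) - T1 (fst y)) * u_profile b c p (snd (snd y))"
    using sep unfolding has_separated_form_def by auto
  have eta_x: "vu X (t, r, u) = (Q1 r - T1 t) * u_profile b c p u" using eta r u by auto
  have "prX_on_solutions a b c p n X t r u ut ur utr urr = ?rhs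
      + (2 * (c + b * u powr p) - b * p * u powr (p - 1) * u_profile b c p u)
        * (Q1 r - T1 t) * ((n - 1) / r * ur + urr)"
    unfolding prX_on_solutions_tau_xi[OF tau xi r u] partials_eta[OF eta b p r u] eta_x
    using r by (simp add: field_simps power2_eq_square)
  then show ?thesis using u_profile_equation[OF u b p] by simp
qed

lemma separated_invariance_iff:
  assumes sep: "has_separated_form b c p X T0 T1 Q0 Q1"
    and b: "b \<noteq> 0" and p: "p \<noteq> 0" and r: "0 < r" and u: "0 < u"
  shows "(\<forall>ut ur utr urr. prX_on_solutions a b c p n X t r u ut ur utr urr = 0) \<longleftrightarrow>
    u_profile b c p u * (T3 t + (c + b * u powr p) * (Q3 r + (n - 1) / r * Q2 r)) = 0 \<and>
    (2 * u_profile' b c p u + 1) * T2 t = 0 \<and>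
    (Q1 r - T1 t) * u_profile'' b c p u = 0 \<and>
    (c + b * u powr p) * ((n - 1) * (Q0 r / r^2 - Q1 r / r) - (2 * u_profile' b c p u - 1) * Q2 r)
       - 2 * a * u powr (p - 1) * u_profile b c p u * Q2 r = 0 \<and>
    (Q1 r - T1 t) * (a * u powr (p - 1) * (2 - u_profile' b c p u)
       - (c + b * u powr p) * u_profile'' b c p u
       - a * (p - 1) * u powr (p - 2) * u_profile b c p u) = 0"
proof -
  define A where "A = - (u_profile b c p u * (T3 t + (c + b * u powr p) * (Q3 r + (n - 1) / r * Q2 r)))"
  define B where "B = - ((2 * u_profile' b c p u + 1) * T2 t)"
  define C where "C = (Q1 r - T1 t) * u_profile'' b c p u"
  define D where "D = (c + b * u powr p) * ((n - 1) * (Q0 r / r^2 - Q1 r / r)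
      - (2 * u_profile' b c p u - 1) * Q2 r) - 2 * a * u powr (p - 1) * u_profile b c p u * Q2 r"
  define E where "E = (Q1 r - T1 t) * (a * u powr (p - 1) * (2 - u_profile' b c p u)
       - (c + b * u powr p) * u_profile'' b c p u
       - a * (p - 1) * u powr (p - 2) * u_profile b c p u)"
  have "(\<forall>ut ur utr urr. prX_on_solutions a b c p n X t r u ut ur utr urr = 0) \<longleftrightarrow>
      (\<forall>ut ur. A + B * ut + C * ut^2 + D * ur + E * ur^2 = 0)"
    unfolding prX_on_solutions_separated[OF sep b p r u] A_def B_def C_def D_def E_def by simp
  then show ?thesis unfolding poly_ut_ur_eq_zero_iff A_def B_def C_def D_def E_def by simp
qed

end

section \<open>Point symmetries have separated form\<close>

lemma inj_on_affine_powr: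
  fixes b c p :: real
  assumes "b \<noteq> 0" "p \<noteq> 0"
  shows "inj_on (\<lambda>u. c + b * u powr p) {0<..}"
proof (rule inj_onI)
  fix u v :: real
  assume "u \<in> {0<..}" "v \<in> {0<..}" "c + b * u powr p = c + b * v powr p"
  then have "(u powr p) powr (1 / p) = (v powr p) powr (1 / p)" "0 < u" "0 < v"
    using assms by auto
  then show "u = v" using assms by (simp add: powr_powr)
qed

lemma continuous_zero_if_factor_injective:
  fixes g :: "pt \<Rightarrow> real"
  assumes cont: "continuous_on Omega g"
    and zero: "\<And>t r u. 0 < r \<Longrightarrow> 0 < u \<Longrightarrow> F u * g (t, r, u) = 0"
    and inj: "inj_on F {0<..}" and r: "0 < r" and u: "0 < u"
  shows "g (t, r, u) = 0"
proof (cases "F u = 0")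
  case False
  then show ?thesis using zero[OF r u, of t] by simp
next
  case True
  define s where "s k = u + inverse (real (Suc k))" for k
  have s_pos: "0 < s k" for k using u unfolding s_def by (simp add: add_pos_pos)
  have "F (s k) \<noteq> 0" for k
    using inj_onD[OF inj, of u "s k"] True s_pos u unfolding s_def by auto
  then have g_zero: "g (t, r, s k) = 0" for k using zero[OF r s_pos] by simp
  have "s \<longlonglongrightarrow> u + 0"
    unfolding s_def by (intro tendsto_add tendsto_const LIMSEQ_inverse_real_of_nat)
  then have "(\<lambda>k. (t, r, s k)) \<longlonglongrightarrow> (t, r, u)"
    by (intro tendsto_Pair tendsto_const) auto
  moreover have "isCont g (t, r, u)"
    using continuous_on_eq_continuous_at[OF open_Omega] cont mem_Omega r u by blast
  ultimately have "(\<lambda>k. g (t, r, s k)) \<longlonglongrightarrow> g (t, r, u)"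
    by (rule isCont_tendsto_compose[rotated])
  then show ?thesis by (simp add: g_zero LIMSEQ_const_iff)
qed

text \<open>The terms of the invariance condition containing u_tr give
  xi_u = 0, (c + b u^p) tau_u = 0 and xi_t = (c + b u^p) tau_r; since c + b u^p takes
  distinct values at u = 1 and u = 2, this forces tau = tau(t) and xi = xi(r).\<close>

lemma point_symmetry_tau_xi:
  assumes b: "b \<noteq> 0" and p: "p \<noteq> 0" and sym: "is_point_symmetry a b c p n X"
  shows "\<forall>y\<in>Omega. Du (vt X) y = 0" "\<forall>y\<in>Omega. Dr (vt X) y = 0"
    "\<forall>y\<in>Omega. Dt (vr X) y = 0" "\<forall>y\<in>Omega. Du (vr X) y = 0"
proof -
  let ?F = "\<lambda>u. c + b * u powr p"
  have smooth: "smooth_on Omega (vt X)" "smooth_on Omega (vr X)"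
    using sym unfolding is_point_symmetry_def by auto
  then have diff: "\<forall>y\<in>Omega. vt X differentiable (at y)" "\<forall>y\<in>Omega. vr X differentiable (at y)"
    using smooth_on_differentiable by blast+
  note zero = point_symmetry_prX_on_solutions[OF sym]
  have xi_u': "Du (vr X) (t, r, u) = 0" if "0 < r" "0 < u" for t r u
    using prX_on_solutions_coeff_ut_utr[of a b c p n X t r u] zero[OF that] by simp
  show xi_u: "\<forall>y\<in>Omega. Du (vr X) y = 0" by (rule ball_OmegaI) (rule xi_u')
  have tau_u_factor: "?F u * Du (vt X) (t, r, u) = 0" if "0 < r" "0 < u" for t r u
  proof -
    have "2 * ?F u * Du (vt X) (t, r, u) = 0"
      using prX_on_solutions_coeff_ur_utr[of a b c p n X t r u] zero[OF that] by simp
    then show ?thesis by (metis mult_eq_0_iff zero_neq_numeral)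
  qed
  have "continuous_on Omega (Du (vt X))"
    by (rule smooth_on_continuous[OF smooth_on_partials(3)[OF smooth(1)]])
  then have tau_u': "Du (vt X) (t, r, u) = 0" if "0 < r" "0 < u" for t r u
    using continuous_zero_if_factor_injective[where F="?F", OF _ tau_u_factor
        inj_on_affine_powr[OF b p] that] by blast
  show tau_u: "\<forall>y\<in>Omega. Du (vt X) y = 0" by (rule ball_OmegaI) (rule tau_u')
  have xi_t: "Dt (vr X) (t, r, u) = ?F u * Dr (vt X) (t, r, u)" if "0 < r" "0 < u" for t r u
  proof -
    have "- 2 * Dt (vr X) (t, r, u) + 2 * ?F u * Dr (vt X) (t, r, u) = 0"
      using prX_on_solutions_coeff_utr[of a b c p n X t r u] zero[OF that] by simp
    then show ?thesis by (simp add: algebra_simps)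
  qed
  have const_u: "vt X (t, r, u) = vt X (t, r, 1)" "vr X (t, r, u) = vr X (t, r, 1)"
    if "0 < r" "0 < u" for t r u
    using constant_in_u[OF diff(1) tau_u, where t=t and r=r and u=u and v=1]
      constant_in_u[OF diff(2) xi_u, where t=t and r=r and u=u and v=1] that
    by simp_all
  have indep: "\<forall>y\<in>Omega. vt X y = vt X (fst y, fst (snd y), 1)"
    "\<forall>y\<in>Omega. vr X y = vr X (fst y, fst (snd y), 1)"
    by (rule ball_OmegaI, simp only: fst_conv snd_conv, rule const_u, assumption+)+
  have u_indep: "Dr (vt X) (t, r, u) = Dr (vt X) (t, r, 1)" "Dt (vr X) (t, r, u) = Dt (vr X) (t, r, 1)"
    if "0 < r" "0 < u" for t r u
    using partials_of_u_independent[OF indep(1) diff(1) that]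
      partials_of_u_independent[OF indep(2) diff(2) that] by simp_all
  have tau_r1: "Dr (vt X) (t, r, 1) = 0" if "0 < r" for t r
  proof -
    have "(?F 1 - ?F 2) * Dr (vt X) (t, r, 1) = 0"
      using xi_t[OF that, of 1 t] xi_t[OF that, of 2 t] u_indep[OF that, of 2 t]
      by (simp add: algebra_simps)
    moreover have "?F 1 \<noteq> ?F 2"
    proof
      assume "?F 1 = ?F 2"
      then have "(1::real) = 2" by (rule inj_onD[OF inj_on_affine_powr[OF b p]]) auto
      then show False by simp
    qed
    ultimately show ?thesis by simp
  qed
  then have tau_r': "Dr (vt X) (t, r, u) = 0" and xi_t': "Dt (vr X) (t, r, u) = 0"
    if "0 < r" "0 < u" for t r u
    using u_indep[OF that] xi_t[OF that] tau_r1[OF that(1)] by simp_all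
  show "\<forall>y\<in>Omega. Dr (vt X) y = 0" by (rule ball_OmegaI) (rule tau_r')
  show "\<forall>y\<in>Omega. Dt (vr X) y = 0" by (rule ball_OmegaI) (rule xi_t')
qed

lemma point_symmetry_separated_form:
  assumes b: "b \<noteq> 0" and p: "p \<noteq> 0" and sym: "is_point_symmetry a b c p n X"
  obtains T0 T1 T2 T3 Q0 Q1 Q2 Q3
  where "separated_ansatz T0 T1 T2 T3 Q0 Q1 Q2 Q3" "has_separated_form b c p X T0 T1 Q0 Q1"
proof -
  have smooth: "smooth_on Omega (vt X)" "smooth_on Omega (vr X)"
    using sym unfolding is_point_symmetry_def by auto
  then have diff: "\<forall>y\<in>Omega. vt X differentiable (at y)" "\<forall>y\<in>Omega. vr X differentiable (at y)"
    using smooth_on_differentiable by blast+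
  note D = point_symmetry_tau_xi[OF b p sym]
  define T0 where "T0 s = vt X (s, 1, 1)" for s
  define T1 where "T1 s = Dt (vt X) (s, 1, 1)" for s
  define T2 where "T2 s = Dt (Dt (vt X)) (s, 1, 1)" for s
  define T3 where "T3 s = Dt (Dt (Dt (vt X))) (s, 1, 1)" for s
  define Q0 where "Q0 s = vr X (0, s, 1)" for s
  define Q1 where "Q1 s = Dr (vr X) (0, s, 1)" for s
  define Q2 where "Q2 s = Dr (Dr (vr X)) (0, s, 1)" for s
  define Q3 where "Q3 s = Dr (Dr (Dr (vr X))) (0, s, 1)" for s
  have tau: "\<forall>y\<in>Omega. vt X y = T0 (fst y)"
  proof (rule ball_OmegaI)
    fix t r u :: real assume "0 < r" "0 < u"
    then show "vt X (t, r, u) = T0 (fst (t, r, u))"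
      using constant_in_u[OF diff(1) D(1), where t=t and r=r and u=u and v=1]
        constant_in_r[OF diff(1) D(2), where t=t and r=r and r'=1 and u=1]
      unfolding T0_def by simp
  qed
  have xi: "\<forall>y\<in>Omega. vr X y = Q0 (fst (snd y))"
  proof (rule ball_OmegaI)
    fix t r u :: real assume "0 < r" "0 < u"
    then show "vr X (t, r, u) = Q0 (fst (snd (t, r, u)))"
      using constant_in_u[OF diff(2) D(4), where t=t and r=r and u=u and v=1]
        constant_in_t[OF diff(2) D(3), where t=t and r=r and u=1 and t'=0]
      unfolding Q0_def by simp
  qed
  have smooth_t: "smooth_on Omega (Dt (vt X))" "smooth_on Omega (Dt (Dt (vt X)))"
    and smooth_r: "smooth_on Omega (Dr (vr X))" "smooth_on Omega (Dr (Dr (vr X)))"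
    using smooth_on_partials smooth by blast+
  interpret separated_ansatz T0 T1 T2 T3 Q0 Q1 Q2 Q3
  proof
    show "(T0 has_real_derivative T1 s) (at s)" "(T1 has_real_derivative T2 s) (at s)"
      "(T2 has_real_derivative T3 s) (at s)" for s
      unfolding T0_def[abs_def] T1_def[abs_def] T2_def[abs_def] T3_def
      using smooth smooth_t by (auto intro!: DERIV_Dt smooth_on_differentiable)
    show "(Q0 has_real_derivative Q1 s) (at s)" "(Q1 has_real_derivative Q2 s) (at s)"
      "(Q2 has_real_derivative Q3 s) (at s)" if "0 < s" for s
      unfolding Q0_def[abs_def] Q1_def[abs_def] Q2_def[abs_def] Q3_def
      using smooth smooth_r that by (auto intro!: DERIV_Dr smooth_on_differentiable)
  qed
  have "vu X (t, r, u) = (Q1 r - T1 t) * u_profile b c p u" if r: "0 < r" and u: "0 < u" for t r u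
  proof -
    have "prX_on_solutions a b c p n X t r u 0 0 0 1 - prX_on_solutions a b c p n X t r u 0 0 0 0
        = 2 * (c + b * u powr p) * (Q1 r - T1 t) - b * p * u powr (p - 1) * vu X (t, r, u)"
      unfolding prX_on_solutions_tau_xi[OF tau xi r u] by simp
    then have "b * p * u powr (p - 1) * vu X (t, r, u) = 2 * (c + b * u powr p) * (Q1 r - T1 t)"
      using point_symmetry_prX_on_solutions[OF sym r u] by simp
    also have "\<dots> = b * p * u powr (p - 1) * ((Q1 r - T1 t) * u_profile b c p u)"
      using u_profile_equation[OF u b p, of c] by simp
    finally show ?thesis using b p u by simp
  qed
  then have "has_separated_form b c p X T0 T1 Q0 Q1"
    using tau xi unfolding has_separated_form_def by (auto simp: Omega_def)
  with separated_ansatz_axioms show ?thesis by (rule that)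
qed

section \<open>The ordinary differential equations\<close>

lemma DERIV_unique_on_pos:
  assumes "(f has_real_derivative f') (at r)" "(g has_real_derivative g') (at r)"
    and "\<And>s. 0 < s \<Longrightarrow> f s = g s" "0 < r"
  shows "f' = g'"
proof -
  have "(g has_real_derivative f') (at r)"
    by (rule has_field_derivative_transform_within_open[OF assms(1), of "{0<..}"]) (use assms in auto)
  then show ?thesis using DERIV_unique assms(2) by blast
qed

lemma quadratic_if_third_derivative_zero:
  assumes T01: "\<And>s. (T0 has_real_derivative T1 s) (at s)"
    and T12: "\<And>s. (T1 has_real_derivative T2 s) (at s)"
    and T23: "\<And>s. (T2 has_real_derivative 0) (at s)"
  obtains g d e where "\<And>t. T0 t = g + d * t + e * t^2" "\<And>t. T1 t = d + 2 * e * t" "\<And>t. T2 t = 2 * e"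
proof -
  define e where "e = T2 0 / 2"
  have T2: "T2 t = 2 * e" for t
    unfolding e_def using DERIV_isconst_all[of T2 t 0] T23 by simp
  have "((\<lambda>t. T1 t - 2 * e * t) has_real_derivative 0) (at s)" for s
    using T12[of s] T2[of s] by (auto intro!: derivative_eq_intros)
  then have T1: "T1 t = T1 0 + 2 * e * t" for t
    using DERIV_isconst_all[of "\<lambda>t. T1 t - 2 * e * t" t 0] by simp
  have "((\<lambda>t. T0 t - T1 0 * t - e * t^2) has_real_derivative 0) (at s)" for s
    using T01[of s] T1[of s] by (auto intro!: derivative_eq_intros)
  then have T0: "T0 t = T0 0 + T1 0 * t + e * t^2" for t
    using DERIV_isconst_all[of "\<lambda>t. T0 t - T1 0 * t - e * t^2" t 0] by simp
  show ?thesis by (rule that[OF T0 T1 T2])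
qed

text \<open>Integrating (Q0 / r)' = (r Q1 - Q0) / r^2 against a known primitive G.\<close>

lemma radial_quotient_integral:
  assumes Q01: "\<And>s. 0 < s \<Longrightarrow> (Q0 has_real_derivative Q1 s) (at s)"
    and G: "\<And>s. 0 < s \<Longrightarrow> (G has_real_derivative (s * Q1 s - Q0 s) / s^2) (at s)"
  obtains \<alpha> where "\<And>r. 0 < r \<Longrightarrow> Q0 r = \<alpha> * r + r * G r"
proof
  have "((\<lambda>s. Q0 s / s - G s) has_real_derivative 0) (at s)" if s: "0 < s" for s
  proof -
    have "((\<lambda>s. Q0 s / s - G s) has_real_derivative
        (Q1 s * s - Q0 s) / s^2 - (s * Q1 s - Q0 s) / s^2) (at s)"
      using Q01[OF s] G[OF s] s by (auto intro!: derivative_eq_intros simp: power2_eq_square)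
    then show ?thesis by (simp add: algebra_simps)
  qed
  then have "Q0 r / r - G r = Q0 1 / 1 - G 1" if "0 < r" for r
    by (rule DERIV_zero_imp_eq_pos) (use that in auto)
  then show "Q0 r = (Q0 1 - G 1) * r + r * G r" if "0 < r" for r
    using that by (simp add: field_simps)
qed

lemma euler_equation_solution:
  fixes n :: real
  assumes Q23: "\<And>s. 0 < s \<Longrightarrow> (Q2 has_real_derivative Q3 s) (at s)"
    and ode: "\<And>r. 0 < r \<Longrightarrow> Q3 r + (n - 1) / r * Q2 r = 0" and r: "0 < r"
  shows "Q2 r = Q2 1 * r powr (1 - n)"
proof -
  have "((\<lambda>r. r powr (n - 1) * Q2 r) has_real_derivative 0) (at s)" if s: "0 < s" for s
  proof -
    have "((\<lambda>r. r powr (n - 1) * Q2 r) has_real_derivative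
        (n - 1) * s powr (n - 1 - 1) * Q2 s + Q3 s * s powr (n - 1)) (at s)"
      by (intro DERIV_mult has_real_derivative_powr Q23 s)
    moreover have "s powr (n - 1) = s * s powr (n - 1 - 1)" using powr_mult_base[of s "n - 1 - 1"] s by simp
    moreover have "Q3 s = - ((n - 1) / s * Q2 s)" using ode[OF s] by (simp add: eq_neg_iff_add_eq_0)
    ultimately show ?thesis using s by simp
  qed
  then have "r powr (n - 1) * Q2 r = 1 powr (n - 1) * Q2 1" by (rule DERIV_zero_imp_eq_pos) (use r in auto)
  moreover have "r powr (1 - n) * r powr (n - 1) = 1" using r by (simp add: powr_add[symmetric])
  then have "Q2 r = r powr (1 - n) * (r powr (n - 1) * Q2 r)" by (simp add: mult.assoc[symmetric])
  ultimately show ?thesis by (simp add: mult.commute)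
qed

lemma radial_equations_solution:
  fixes n K :: real
  assumes n: "n \<noteq> 1"
    and Q01: "\<And>s. 0 < s \<Longrightarrow> (Q0 has_real_derivative Q1 s) (at s)"
    and Q12: "\<And>s. 0 < s \<Longrightarrow> (Q1 has_real_derivative Q2 s) (at s)"
    and Q23: "\<And>s. 0 < s \<Longrightarrow> (Q2 has_real_derivative Q3 s) (at s)"
    and ode: "\<And>r. 0 < r \<Longrightarrow> Q3 r + (n - 1) / r * Q2 r = 0"
    and rel: "\<And>r. 0 < r \<Longrightarrow> (n - 1) * (Q0 r - r * Q1 r) + K * r^2 * Q2 r = 0"
  obtains \<alpha> \<beta> \<gamma> where "\<And>r. 0 < r \<Longrightarrow> Q0 r = \<alpha> * r + \<beta> * r powr (3 - n) + \<gamma> * (r * ln r)"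
    "\<beta> \<noteq> 0 \<Longrightarrow> n \<noteq> 2 \<and> K * (3 - n) = n - 1" "\<gamma> \<noteq> 0 \<Longrightarrow> n = 2 \<and> K = 1"
proof -
  define C where "C = Q2 1"
  have Q2: "Q2 r = C * r powr (1 - n)" if "0 < r" for r
    unfolding C_def by (rule euler_equation_solution[OF Q23 ode that])
  have slope: "(s * Q1 s - Q0 s) / s^2 = K * C * s powr (1 - n) / (n - 1)" if s: "0 < s" for s
    using rel[OF s] Q2[OF s] n s by (simp add: field_simps power2_eq_square)
  have K: "K * (3 - n) = n - 1" if "C \<noteq> 0"
  proof -
    have "((\<lambda>r. (n - 1) * (Q0 r - r * Q1 r) + K * r^2 * Q2 r) has_real_derivative
        (n - 1) * (Q1 1 - (Q1 1 + 1 * Q2 1)) + K * (2 * 1 * Q2 1 + 1^2 * Q3 1)) (at 1)"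
      using Q01[of 1] Q12[of 1] Q23[of 1]
      by (auto intro!: derivative_eq_intros simp: algebra_simps power2_eq_square)
    then have "(n - 1) * (Q1 1 - (Q1 1 + 1 * Q2 1)) + K * (2 * 1 * Q2 1 + 1^2 * Q3 1) = 0"
      by (rule DERIV_unique_on_pos[OF _ DERIV_const]) (use rel in auto)
    moreover have "Q3 1 = - ((n - 1) * Q2 1)" using ode[of 1] by (simp add: eq_neg_iff_add_eq_0)
    ultimately have "C * (K * (3 - n) - (n - 1)) = 0" unfolding C_def by (simp add: algebra_simps)
    then show ?thesis using that by simp
  qed
  consider "C = 0" | "C \<noteq> 0" "n = 2" | "C \<noteq> 0" "n \<noteq> 2" by blast
  then show ?thesis
  proof cases
    case 1
    have G: "((\<lambda>s. 0) has_real_derivative (s * Q1 s - Q0 s) / s^2) (at s)" if "0 < s" for s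
      using DERIV_const[of 0 "at s"] by (simp add: slope[OF that] 1)
    obtain \<alpha> where "\<And>r. 0 < r \<Longrightarrow> Q0 r = \<alpha> * r + r * 0"
      using radial_quotient_integral[OF Q01 G] by blast
    then show ?thesis by (intro that[of \<alpha> 0 0]) simp_all
  next
    case 2
    have G: "((\<lambda>s. C * ln s) has_real_derivative (s * Q1 s - Q0 s) / s^2) (at s)" if "0 < s" for s
    proof -
      have "((\<lambda>s. C * ln s) has_real_derivative C * (1 / s)) (at s)"
        using that by (auto intro!: derivative_eq_intros)
      moreover have "C * (1 / s) = (s * Q1 s - Q0 s) / s^2"
        unfolding slope[OF that] using that 2 K[OF 2(1)] by (simp add: powr_minus_divide)
      ultimately show ?thesis by simp
    qed
    obtain \<alpha> where "\<And>r. 0 < r \<Longrightarrow> Q0 r = \<alpha> * r + r * (C * ln r)"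
      using radial_quotient_integral[OF Q01 G] by blast
    then show ?thesis
    proof (intro that[of \<alpha> 0 C])
      show "n = 2 \<and> K = 1" using 2 K[OF 2(1)] by simp
    qed (simp_all add: algebra_simps)
  next
    case 3
    define \<beta> where "\<beta> = K * C / ((n - 1) * (2 - n))"
    have G: "((\<lambda>s. \<beta> * s powr (2 - n)) has_real_derivative (s * Q1 s - Q0 s) / s^2) (at s)"
      if "0 < s" for s
    proof -
      have "((\<lambda>s. \<beta> * s powr (2 - n)) has_real_derivative \<beta> * ((2 - n) * s powr (2 - n - 1))) (at s)"
        using that by (auto intro!: derivative_eq_intros)
      moreover have "2 - n \<noteq> 0" using 3 by simp
      then have "\<beta> * (2 - n) = K * C / (n - 1)" unfolding \<beta>_def by simp
      then have "\<beta> * ((2 - n) * s powr (2 - n - 1)) = (s * Q1 s - Q0 s) / s^2"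
        unfolding slope[OF that] by (simp add: mult.assoc[symmetric])
      ultimately show ?thesis by simp
    qed
    obtain \<alpha> where "\<And>r. 0 < r \<Longrightarrow> Q0 r = \<alpha> * r + r * (\<beta> * r powr (2 - n))"
      using radial_quotient_integral[OF Q01 G] by blast
    moreover have "r * r powr (2 - n) = r powr (3 - n)" if "0 < r" for r
      using powr_mult_base[of r "2 - n"] that by simp
    ultimately show ?thesis
    proof (intro that[of \<alpha> \<beta> 0])
      show "n \<noteq> 2 \<and> K * (3 - n) = n - 1" using 3 K[OF 3(1)] by simp
    qed (simp_all add: algebra_simps)
  qed
qed

section \<open>Solving the determining equations\<close>

lemma affine_identity_coeffs:
  fixes A B v :: real
  assumes inj: "inj_on F {0<..}" and h: "\<And>u. 0 < u \<Longrightarrow> u \<noteq> v \<Longrightarrow> A + F u * B = 0"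
  shows "A = 0" "B = 0"
proof -
  obtain u1 u2 :: real where u: "0 < u1" "0 < u2" "u1 \<noteq> u2" "u1 \<noteq> v" "u2 \<noteq> v"
  proof (cases "v = 1")
    case True
    then show ?thesis by (intro that[of 2 3]) auto
  next
    case False
    then show ?thesis by (cases "v = 2") (auto intro: that[of 1 3] that[of 1 2])
  qed
  have "(F u1 - F u2) * B = (A + F u1 * B) - (A + F u2 * B)" by (simp add: algebra_simps)
  also have "\<dots> = 0" using h u by simp
  finally have "(F u1 - F u2) * B = 0" .
  moreover have "F u1 \<noteq> F u2" using inj_onD[OF inj] u by fastforce
  ultimately show "B = 0" by simp
  then show "A = 0" using h[OF u(1,4)] by simp
qed

lemma u_profile_degenerate:
  assumes "c * (1 - p) = 0" "0 < u" "b \<noteq> 0"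
  shows "u_profile b c p u = 2 * (b * u + p * c) / (b * p)" "u_profile' b c p u = 2 / p"
    "u_profile'' b c p u = 0" "u powr (p - 1) * (b * u + p * c) = c + b * u powr p"
proof -
  consider "c = 0" | "p = 1" using assms(1) by auto
  then have "c * u powr (1 - p) = p * c \<and> u powr (p - 1) * (b * u + p * c) = c + b * u powr p"
  proof cases
    case 1
    then show ?thesis using assms(2) by (simp add: powr_diff algebra_simps)
  qed (use assms in simp)
  then show "u_profile b c p u = 2 * (b * u + p * c) / (b * p)"
    "u powr (p - 1) * (b * u + p * c) = c + b * u powr p"
    unfolding u_profile_def by (simp_all add: algebra_simps)
  show "u_profile' b c p u = 2 / p" "u_profile'' b c p u = 0"
    using assms unfolding u_profile'_def u_profile''_def by (auto simp: mult.assoc)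
qed

lemma degenerate_coefficients:
  fixes a b c p n q0 q1 q2 r u :: real
  assumes degenerate: "c * (1 - p) = 0" and b: "b \<noteq> 0" and p: "p \<noteq> 0" and r: "0 < r" and u: "0 < u"
  shows "2 * u_profile' b c p u + 1 = (4 + p) / p"
    "(c + b * u powr p) * ((n - 1) * (q0 / r^2 - q1 / r) - (2 * u_profile' b c p u - 1) * q2)
       - 2 * a * u powr (p - 1) * u_profile b c p u * q2
     = (c + b * u powr p) * ((n - 1) * (q0 - r * q1) + (1 - 4 / p - 4 * a / (b * p)) * r^2 * q2) / r^2"
    "a * u powr (p - 1) * (2 - u_profile' b c p u) - (c + b * u powr p) * u_profile'' b c p u
       - a * (p - 1) * u powr (p - 2) * u_profile b c p u = 0"
proof -
  note h = u_profile_degenerate[OF degenerate u b]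
  show "2 * u_profile' b c p u + 1 = (4 + p) / p" using p by (simp add: h field_simps)
  have "2 * a * u powr (p - 1) * u_profile b c p u * q2
      = 4 * a / (b * p) * q2 * (u powr (p - 1) * (b * u + p * c))"
    unfolding h(1) by (simp add: field_simps)
  also have "\<dots> = (c + b * u powr p) * (4 * a / (b * p) * q2)"
    unfolding h(4) by simp
  finally show "(c + b * u powr p) * ((n - 1) * (q0 / r^2 - q1 / r) - (2 * u_profile' b c p u - 1) * q2)
       - 2 * a * u powr (p - 1) * u_profile b c p u * q2
     = (c + b * u powr p) * ((n - 1) * (q0 - r * q1) + (1 - 4 / p - 4 * a / (b * p)) * r^2 * q2) / r^2"
    unfolding h(2) using r by (simp add: field_simps power2_eq_square)
  consider "c = 0" | "p = 1" using degenerate by auto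
  then show "a * u powr (p - 1) * (2 - u_profile' b c p u) - (c + b * u powr p) * u_profile'' b c p u
       - a * (p - 1) * u powr (p - 2) * u_profile b c p u = 0"
  proof cases
    case 1
    have "u powr (p - 1) = u * u powr (p - 2)" using powr_mult_base[of u "p - 2"] u by simp
    then show ?thesis unfolding h(1-3) using b p 1 by (simp add: field_simps)
  next
    case 2
    then show ?thesis unfolding h(1-3) by simp
  qed
qed

definition admissible :: "real \<Rightarrow> real \<Rightarrow> real \<Rightarrow> real \<Rightarrow> real \<Rightarrow> real \<Rightarrow> real \<Rightarrow> real \<Rightarrow> real \<Rightarrow> bool"
  where
  "admissible a b c p n k3 k4 k5 k6 \<longleftrightarrow> (\<not> cond3 c p \<longrightarrow> k3 = 0) \<and> (\<not> cond4 a b c p n \<longrightarrow> k4 = 0) \<and>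
     (\<not> cond5 a b c p n \<longrightarrow> k5 = 0) \<and> (\<not> cond6 c p \<longrightarrow> k6 = 0)"

definition xi_comb :: "real \<Rightarrow> real \<Rightarrow> real \<Rightarrow> real \<Rightarrow> real \<Rightarrow> real \<Rightarrow> real \<Rightarrow> real \<Rightarrow> real \<Rightarrow> real \<Rightarrow> real"
  where
  "xi_comb a b c p n k2 k3 k4 k5 r = k2 * r + k3 * (p * b * r / 2)
     + k4 * ((a + b + (1 - p) * c) * r powr (3 - n)) + k5 * (p * b * r * ln r / 2)"

lemma admissible_generic:
  "c * (1 - p) \<noteq> 0 \<Longrightarrow> admissible a b c p n k3 k4 k5 k6 \<longleftrightarrow> k3 = 0 \<and> k4 = 0 \<and> k5 = 0 \<and> k6 = 0"
  unfolding admissible_def cond3_def cond4_def cond5_def cond6_def by (auto simp: algebra_simps)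

lemma degenerate_cond4_iff:
  fixes a b p n :: real
  assumes "b \<noteq> 0" "p \<noteq> 0"
  shows "(1 - 4 / p - 4 * a / (b * p)) * (3 - n) = n - 1 \<longleftrightarrow> (a + b) * (n - 3) = b * p * (n / 2 - 1)"
proof -
  define L where "L = (1 - 4 / p - 4 * a / (b * p)) * (3 - n)"
  define W where "W = (a + b) * (n - 3) - b * p * (n / 2 - 1)"
  have "L - (n - 1) = 4 * W / (b * p)"
    unfolding L_def W_def using assms by (simp add: field_simps)
  then have "L = n - 1 \<longleftrightarrow> W = 0" using assms by auto
  then show ?thesis unfolding L_def W_def by simp
qed

lemma degenerate_cond5_iff:
  fixes a b p :: real
  assumes "b \<noteq> 0" "p \<noteq> 0"
  shows "1 - 4 / p - 4 * a / (b * p) = 1 \<longleftrightarrow> a = - b"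
proof -
  have "1 - 4 / p - 4 * a / (b * p) = 1 - 4 * (a + b) / (b * p)"
    using assms by (simp add: field_simps)
  then show ?thesis using assms by (auto simp: add_eq_0_iff2)
qed

context separated_ansatz
begin

lemma generic_case_solution:
  fixes a b c p n :: real
  assumes n: "n \<noteq> 1" and b: "b \<noteq> 0" and p: "p \<noteq> 0" and generic: "c * (1 - p) \<noteq> 0"
    and eqC: "\<And>t r u. 0 < r \<Longrightarrow> 0 < u \<Longrightarrow> (Q1 r - T1 t) * u_profile'' b c p u = 0"
    and eqD: "\<And>r u. 0 < r \<Longrightarrow> 0 < u \<Longrightarrow>
      (c + b * u powr p) * ((n - 1) * (Q0 r / r^2 - Q1 r / r) - (2 * u_profile' b c p u - 1) * Q2 r)
       - 2 * a * u powr (p - 1) * u_profile b c p u * Q2 r = 0"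
  shows "\<exists>k1 k2. (\<forall>t. T0 t = k1 + k2 * t) \<and> (\<forall>r>0. Q0 r = k2 * r)"
proof -
  have "u_profile'' b c p 1 \<noteq> 0" using generic b p unfolding u_profile''_def by simp
  then have Q1_T1: "Q1 r = T1 t" if "0 < r" for t r using eqC[where t=t and r=r and u=1] that by simp
  define k2 where "k2 = T1 0"
  have T1: "T1 t = k2" for t using Q1_T1[where t=t and r=1] Q1_T1[where t=0 and r=1] unfolding k2_def by simp
  have Q1: "Q1 r = k2" if "0 < r" for r using Q1_T1[OF that] T1 by simp
  have Q2: "Q2 r = 0" if "0 < r" for r
    using DERIV_unique_on_pos[OF Q12[OF that] DERIV_const Q1 that] .
  have "((\<lambda>t. T0 t - k2 * t) has_real_derivative 0) (at s)" for s
    using T01[of s] T1[of s] by (auto intro!: derivative_eq_intros)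
  then have T0: "T0 t = T0 0 + k2 * t" for t
    using DERIV_isconst_all[of "\<lambda>t. T0 t - k2 * t" t 0] by simp
  have "Q0 r = k2 * r" if r: "0 < r" for r
  proof -
    have eq: "0 + (c + b * u powr p) * ((n - 1) * (Q0 r - k2 * r) / r^2) = 0" if "0 < u" "u \<noteq> 0" for u
      using eqD[OF r that(1)] Q1[OF r] Q2[OF r] r by (simp add: field_simps power2_eq_square)
    have "(n - 1) * (Q0 r - k2 * r) / r^2 = 0"
      by (rule affine_identity_coeffs(2)[OF inj_on_affine_powr[OF b p]]) (rule eq)
    then show ?thesis using n r by simp
  qed
  with T0 show ?thesis by blast
qed

lemma degenerate_case_equations:
  fixes a b c p n :: real
  assumes b: "b \<noteq> 0" and p: "p \<noteq> 0" and degenerate: "c * (1 - p) = 0"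
    and eqA: "\<And>t r u. 0 < r \<Longrightarrow> 0 < u \<Longrightarrow>
      u_profile b c p u * (T3 t + (c + b * u powr p) * (Q3 r + (n - 1) / r * Q2 r)) = 0"
    and eqB: "\<And>t u. 0 < u \<Longrightarrow> (2 * u_profile' b c p u + 1) * T2 t = 0"
    and eqD: "\<And>r u. 0 < r \<Longrightarrow> 0 < u \<Longrightarrow>
      (c + b * u powr p) * ((n - 1) * (Q0 r / r^2 - Q1 r / r) - (2 * u_profile' b c p u - 1) * Q2 r)
       - 2 * a * u powr (p - 1) * u_profile b c p u * Q2 r = 0"
  shows "(4 + p) * T2 t = 0" "T3 t = 0" "0 < r \<Longrightarrow> Q3 r + (n - 1) / r * Q2 r = 0"
    "0 < r \<Longrightarrow> (n - 1) * (Q0 r - r * Q1 r) + (1 - 4 / p - 4 * a / (b * p)) * r^2 * Q2 r = 0"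
proof -
  note coeffs = degenerate_coefficients[OF degenerate b p]
  show "(4 + p) * T2 t = 0"
    using eqB[of 1 t] coeffs(1)[OF zero_less_one zero_less_one] p by simp
  have eqA': "T3 t + (c + b * u powr p) * (Q3 r + (n - 1) / r * Q2 r) = 0"
    if "0 < r" "0 < u" "u \<noteq> - p * c / b" for t r u
  proof -
    have "u_profile b c p u \<noteq> 0"
      using u_profile_degenerate(1)[OF degenerate that(2) b] that(3) b p by (auto simp: field_simps)
    then show ?thesis using eqA[OF that(1,2)] by simp
  qed
  show "T3 t = 0"
    by (rule affine_identity_coeffs(1)[OF inj_on_affine_powr[OF b p]]) (rule eqA'[OF zero_less_one])
  show "Q3 r + (n - 1) / r * Q2 r = 0" if "0 < r"
    by (rule affine_identity_coeffs(2)[OF inj_on_affine_powr[OF b p]]) (rule eqA'[OF that])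
  assume r: "0 < r"
  have eqD': "0 + (c + b * u powr p) * ((n - 1) * (Q0 r - r * Q1 r) + (1 - 4 / p - 4 * a / (b * p)) * r^2 * Q2 r)
      = 0" if "0 < u" "u \<noteq> 0" for u
    using eqD[OF r that(1)] unfolding coeffs(2)[OF r that(1)] using r by simp
  show "(n - 1) * (Q0 r - r * Q1 r) + (1 - 4 / p - 4 * a / (b * p)) * r^2 * Q2 r = 0"
    by (rule affine_identity_coeffs(2)[OF inj_on_affine_powr[OF b p]]) (rule eqD')
qed

lemma degenerate_case_solution:
  fixes a b c p n :: real
  assumes n: "n \<noteq> 1" and b: "b \<noteq> 0" and p: "p \<noteq> 0" and degenerate: "c * (1 - p) = 0"
    and T2: "\<And>t. (4 + p) * T2 t = 0" and T3: "\<And>t. T3 t = 0"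
    and ode: "\<And>r. 0 < r \<Longrightarrow> Q3 r + (n - 1) / r * Q2 r = 0"
    and rel: "\<And>r. 0 < r \<Longrightarrow> (n - 1) * (Q0 r - r * Q1 r) + (1 - 4 / p - 4 * a / (b * p)) * r^2 * Q2 r = 0"
  shows "\<exists>k1 k2 k3 k4 k5 k6. admissible a b c p n k3 k4 k5 k6 \<and> (\<forall>t. T0 t = k1 + k2 * t + k6 * t^2) \<and>
    (\<forall>r>0. Q0 r = xi_comb a b c p n k2 k3 k4 k5 r)"
proof -
  have "(T2 has_real_derivative 0) (at s)" for s using T23[of s] by (simp add: T3)
  then obtain k1 k2 k6 where T0: "\<And>t. T0 t = k1 + k2 * t + k6 * t^2" and T2': "\<And>t. T2 t = 2 * k6"
    using quadratic_if_third_derivative_zero[OF T01 T12] by metis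
  obtain \<alpha> \<beta> \<gamma> where Q0: "\<And>r. 0 < r \<Longrightarrow> Q0 r = \<alpha> * r + \<beta> * r powr (3 - n) + \<gamma> * (r * ln r)"
    and \<beta>: "\<beta> \<noteq> 0 \<Longrightarrow> n \<noteq> 2 \<and> (1 - 4 / p - 4 * a / (b * p)) * (3 - n) = n - 1"
    and \<gamma>: "\<gamma> \<noteq> 0 \<Longrightarrow> n = 2 \<and> 1 - 4 / p - 4 * a / (b * p) = 1"
    using radial_equations_solution[OF n Q01 Q12 Q23 ode rel] by blast
  have A: "a + b + (1 - p) * c = a + b" using degenerate by (simp add: algebra_simps)
  have cond3: "cond3 c p" unfolding cond3_def using degenerate by (simp add: algebra_simps)
  have cond4: "cond4 a b c p n \<and> a + b \<noteq> 0" if "\<beta> \<noteq> 0"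
  proof -
    have n2: "n \<noteq> 2" and r4: "(a + b) * (n - 3) = b * p * (n / 2 - 1)"
      using \<beta>[OF that] degenerate_cond4_iff[OF b p] by auto
    then have "a + b \<noteq> 0" using b p by auto
    with n2 r4 cond3 show ?thesis unfolding cond3_def cond4_def A by simp
  qed
  have cond5: "cond5 a b c p n" if "\<gamma> \<noteq> 0"
    using \<gamma>[OF that] degenerate_cond5_iff[OF b p] cond3 unfolding cond3_def cond5_def by simp
  have cond6: "cond6 c p" if "k6 \<noteq> 0"
  proof -
    have "p = -4" using T2[of 0] T2'[of 0] that by simp
    then show ?thesis using degenerate unfolding cond6_def by simp
  qed
  define k4 where "k4 = \<beta> / (a + b)"
  have k4: "k4 * (a + b + (1 - p) * c) = \<beta>" using cond4 unfolding k4_def A by fastforce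
  have "admissible a b c p n (2 * (\<alpha> - k2) / (p * b)) k4 (2 * \<gamma> / (p * b)) k6"
    unfolding admissible_def using cond3 cond4 cond5 cond6 by (auto simp: k4_def)
  moreover have "Q0 r = xi_comb a b c p n k2 (2 * (\<alpha> - k2) / (p * b)) k4 (2 * \<gamma> / (p * b)) r"
    if "0 < r" for r
  proof -
    have "xi_comb a b c p n k2 (2 * (\<alpha> - k2) / (p * b)) k4 (2 * \<gamma> / (p * b)) r
        = \<alpha> * r + (k4 * (a + b + (1 - p) * c)) * r powr (3 - n) + \<gamma> * (r * ln r)"
      unfolding xi_comb_def using b p by (simp add: field_simps)
    then show ?thesis unfolding k4 Q0[OF that] by simp
  qed
  ultimately show ?thesis using T0 by blast
qed

end

section \<open>The symmetries are the admissible combinations of the generators\<close>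

definition xi_comb' :: "real \<Rightarrow> real \<Rightarrow> real \<Rightarrow> real \<Rightarrow> real \<Rightarrow> real \<Rightarrow> real \<Rightarrow> real \<Rightarrow> real \<Rightarrow> real \<Rightarrow> real"
  where
  "xi_comb' a b c p n k2 k3 k4 k5 r = k2 + k3 * (p * b / 2)
     + k4 * ((a + b + (1 - p) * c) * (3 - n) * r powr (2 - n)) + k5 * (p * b * (ln r + 1) / 2)"

definition xi_comb'' :: "real \<Rightarrow> real \<Rightarrow> real \<Rightarrow> real \<Rightarrow> real \<Rightarrow> real \<Rightarrow> real \<Rightarrow> real \<Rightarrow> real"
  where
  "xi_comb'' a b c p n k4 k5 r =
     k4 * ((a + b + (1 - p) * c) * (3 - n) * (2 - n) * r powr (1 - n)) + k5 * (p * b / (2 * r))"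

definition xi_comb''' :: "real \<Rightarrow> real \<Rightarrow> real \<Rightarrow> real \<Rightarrow> real \<Rightarrow> real \<Rightarrow> real \<Rightarrow> real \<Rightarrow> real"
  where
  "xi_comb''' a b c p n k4 k5 r =
     k4 * ((a + b + (1 - p) * c) * (3 - n) * (2 - n) * (1 - n) * r powr (- n)) - k5 * (p * b / (2 * r^2))"

definition eta_comb ::
    "real \<Rightarrow> real \<Rightarrow> real \<Rightarrow> real \<Rightarrow> real \<Rightarrow> real \<Rightarrow> real \<Rightarrow> real \<Rightarrow> real \<Rightarrow> real \<Rightarrow> real \<Rightarrow> real \<Rightarrow> real"
  where
  "eta_comb a b c p n k3 k4 k5 k6 t r u = k3 * (b * u + p * c)
     + k4 * ((2 - n) * r powr (2 - n) * ((b + (1 - p) * c) * u + p * c))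
     + k5 * ((1 + ln r) * (b * u + p * c)) + k6 * (t * u)"

lemma DERIV_xi_comb:
  "0 < s \<Longrightarrow> (xi_comb a b c p n k2 k3 k4 k5 has_real_derivative xi_comb' a b c p n k2 k3 k4 k5 s) (at s)"
  unfolding xi_comb_def[abs_def] xi_comb'_def
  by (auto intro!: derivative_eq_intros simp: field_simps)

lemma DERIV_xi_comb':
  "0 < s \<Longrightarrow> (xi_comb' a b c p n k2 k3 k4 k5 has_real_derivative xi_comb'' a b c p n k4 k5 s) (at s)"
  unfolding xi_comb'_def[abs_def] xi_comb''_def
  by (auto intro!: derivative_eq_intros simp: field_simps)

lemma DERIV_xi_comb'':
  "0 < s \<Longrightarrow> (xi_comb'' a b c p n k4 k5 has_real_derivative xi_comb''' a b c p n k4 k5 s) (at s)"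
  unfolding xi_comb''_def[abs_def] xi_comb'''_def
  by (auto intro!: derivative_eq_intros simp: field_simps power2_eq_square)

lemma combination_eq:
  "k1 *\<^sub>R X1 (t, r, u) + k2 *\<^sub>R X2 (t, r, u) + k3 *\<^sub>R X3 b c p (t, r, u) + k4 *\<^sub>R X4 a b c p n (t, r, u)
     + k5 *\<^sub>R X5 b c p (t, r, u) + k6 *\<^sub>R X6 (t, r, u)
   = (k1 + k2 * t + k6 * t^2, xi_comb a b c p n k2 k3 k4 k5 r, eta_comb a b c p n k3 k4 k5 k6 t r u)"
  unfolding X1_def X2_def X3_def X4_def X5_def X6_def xi_comb_def eta_comb_def
  by (simp add: algebra_simps)

lemma eta_comb_eq:
  assumes b: "b \<noteq> 0" and p: "p \<noteq> 0" and adm: "admissible a b c p n k3 k4 k5 k6"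
    and r: "0 < r" and u: "0 < u"
  shows "(xi_comb' a b c p n k2 k3 k4 k5 r - (k2 + 2 * k6 * t)) * u_profile b c p u
    = eta_comb a b c p n k3 k4 k5 k6 t r u"
proof (cases "c * (1 - p) = 0")
  case False
  then show ?thesis using adm unfolding admissible_generic[OF False] xi_comb'_def eta_comb_def by simp
next
  case degenerate: True
  have h: "u_profile b c p u = 2 * (b * u + p * c) / (b * p)"
    using u_profile_degenerate[OF degenerate u b] by simp
  have A: "a + b + (1 - p) * c = a + b" "(b + (1 - p) * c) * u + p * c = b * u + p * c"
    using degenerate by (auto simp: algebra_simps)
  have k4: "k4 * ((a + b) * (3 - n)) * 2 = k4 * (2 - n) * (b * p)"
  proof (cases "k4 = 0")
    case False
    then have "(a + b) * (n - 3) = b * p * (n / 2 - 1)"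
      using adm A(1) unfolding admissible_def cond4_def by auto
    then show ?thesis by algebra
  qed simp
  have k6: "k6 * (b * u + p * c) * 4 = - k6 * u * (b * p)"
  proof (cases "k6 = 0")
    case False
    then have "c = 0" "p = -4" using adm unfolding admissible_def cond6_def by auto
    then show ?thesis by simp
  qed simp
  have "(xi_comb' a b c p n k2 k3 k4 k5 r - (k2 + 2 * k6 * t)) * u_profile b c p u
      = k3 * (b * u + p * c) + (k4 * ((a + b) * (3 - n)) * 2) * r powr (2 - n) * (b * u + p * c) / (b * p)
        + k5 * ((1 + ln r) * (b * u + p * c)) - t * (k6 * (b * u + p * c) * 4) / (b * p)"
    unfolding xi_comb'_def h A(1) using b p by (simp add: field_simps)
  also have "\<dots> = k3 * (b * u + p * c) + (k4 * (2 - n) * (b * p)) * r powr (2 - n) * (b * u + p * c) / (b * p)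
        + k5 * ((1 + ln r) * (b * u + p * c)) - t * (- k6 * u * (b * p)) / (b * p)"
    by (simp only: k4 k6)
  also have "\<dots> = eta_comb a b c p n k3 k4 k5 k6 t r u"
    unfolding eta_comb_def A(2) using b p by (simp add: field_simps)
  finally show ?thesis .
qed

lemma combination_iff_separated_form:
  assumes b: "b \<noteq> 0" and p: "p \<noteq> 0" and adm: "admissible a b c p n k3 k4 k5 k6"
  shows "(\<forall>x\<in>Omega. X x = k1 *\<^sub>R X1 x + k2 *\<^sub>R X2 x + k3 *\<^sub>R X3 b c p x
       + k4 *\<^sub>R X4 a b c p n x + k5 *\<^sub>R X5 b c p x + k6 *\<^sub>R X6 x) \<longleftrightarrow>
    has_separated_form b c p X (\<lambda>t. k1 + k2 * t + k6 * t^2) (\<lambda>t. k2 + 2 * k6 * t)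
      (xi_comb a b c p n k2 k3 k4 k5) (xi_comb' a b c p n k2 k3 k4 k5)"
proof -
  have "X (t, r, u) = k1 *\<^sub>R X1 (t, r, u) + k2 *\<^sub>R X2 (t, r, u) + k3 *\<^sub>R X3 b c p (t, r, u)
       + k4 *\<^sub>R X4 a b c p n (t, r, u) + k5 *\<^sub>R X5 b c p (t, r, u) + k6 *\<^sub>R X6 (t, r, u) \<longleftrightarrow>
    vt X (t, r, u) = k1 + k2 * t + k6 * t^2 \<and> vr X (t, r, u) = xi_comb a b c p n k2 k3 k4 k5 r \<and>
    vu X (t, r, u) = (xi_comb' a b c p n k2 k3 k4 k5 r - (k2 + 2 * k6 * t)) * u_profile b c p u"
    if "0 < r" "0 < u" for t r u
    unfolding combination_eq eta_comb_eq[OF b p adm that] vt_def vr_def vu_def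
    by (cases "X (t, r, u)") auto
  then show ?thesis unfolding has_separated_form_def Omega_def by auto
qed

lemma (in separated_ansatz) point_symmetry_determining_equations:
  assumes sym: "is_point_symmetry a b c p n X" and sep: "has_separated_form b c p X T0 T1 Q0 Q1"
    and b: "b \<noteq> 0" and p: "p \<noteq> 0"
  shows "\<And>t r u. 0 < r \<Longrightarrow> 0 < u \<Longrightarrow>
      u_profile b c p u * (T3 t + (c + b * u powr p) * (Q3 r + (n - 1) / r * Q2 r)) = 0"
    and "\<And>t u. 0 < u \<Longrightarrow> (2 * u_profile' b c p u + 1) * T2 t = 0"
    and "\<And>t r u. 0 < r \<Longrightarrow> 0 < u \<Longrightarrow> (Q1 r - T1 t) * u_profile'' b c p u = 0"
    and "\<And>r u. 0 < r \<Longrightarrow> 0 < u \<Longrightarrow>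
      (c + b * u powr p) * ((n - 1) * (Q0 r / r^2 - Q1 r / r) - (2 * u_profile' b c p u - 1) * Q2 r)
       - 2 * a * u powr (p - 1) * u_profile b c p u * Q2 r = 0"
  using separated_invariance_iff[OF sep b p] point_symmetry_prX_on_solutions[OF sym]
  by (meson zero_less_one)+

lemma point_symmetry_imp_combination:
  assumes n: "n \<noteq> 1" and b: "b \<noteq> 0" and p: "p \<noteq> 0" and sym: "is_point_symmetry a b c p n X"
  obtains k1 k2 k3 k4 k5 k6 where "admissible a b c p n k3 k4 k5 k6"
    "\<forall>x\<in>Omega. X x = k1 *\<^sub>R X1 x + k2 *\<^sub>R X2 x + k3 *\<^sub>R X3 b c p x
       + k4 *\<^sub>R X4 a b c p n x + k5 *\<^sub>R X5 b c p x + k6 *\<^sub>R X6 x"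
proof -
  obtain T0 T1 T2 T3 Q0 Q1 Q2 Q3 where ansatz: "separated_ansatz T0 T1 T2 T3 Q0 Q1 Q2 Q3"
    and sep: "has_separated_form b c p X T0 T1 Q0 Q1"
    using point_symmetry_separated_form[OF b p sym] by blast
  interpret separated_ansatz T0 T1 T2 T3 Q0 Q1 Q2 Q3 by (rule ansatz)
  note eqs = point_symmetry_determining_equations[OF sym sep b p]
  obtain k1 k2 k3 k4 k5 k6 where adm: "admissible a b c p n k3 k4 k5 k6"
    and T0: "\<And>t. T0 t = k1 + k2 * t + k6 * t^2"
    and Q0: "\<And>r. 0 < r \<Longrightarrow> Q0 r = xi_comb a b c p n k2 k3 k4 k5 r"
  proof (cases "c * (1 - p) = 0")
    case degenerate: True
    note E = degenerate_case_equations[OF b p degenerate eqs(1) eqs(2) eqs(4)]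
    show ?thesis using degenerate_case_solution[OF n b p degenerate E] that by blast
  next
    case generic: False
    obtain k1 k2 where "\<forall>t. T0 t = k1 + k2 * t" "\<forall>r>0. Q0 r = k2 * r"
      using generic_case_solution[OF n b p generic eqs(3) eqs(4)] by blast
    then show ?thesis
      by (intro that[of 0 0 0 0 k1 k2]) (simp_all add: admissible_def xi_comb_def)
  qed
  have "(T0 has_real_derivative k2 + 2 * k6 * t) (at t)" for t
    unfolding T0 by (auto intro!: derivative_eq_intros)
  then have T1: "T1 t = k2 + 2 * k6 * t" for t using T01 DERIV_unique by blast
  have Q1: "Q1 r = xi_comb' a b c p n k2 k3 k4 k5 r" if "0 < r" for r
    using DERIV_unique_on_pos[OF Q01[OF that] DERIV_xi_comb[OF that] Q0 that] .
  have "has_separated_form b c p X (\<lambda>t. k1 + k2 * t + k6 * t^2) (\<lambda>t. k2 + 2 * k6 * t)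
      (xi_comb a b c p n k2 k3 k4 k5) (xi_comb' a b c p n k2 k3 k4 k5)"
    using sep unfolding has_separated_form_def Omega_def by (auto simp: T0 T1 Q0 Q1)
  then have "\<forall>x\<in>Omega. X x = k1 *\<^sub>R X1 x + k2 *\<^sub>R X2 x + k3 *\<^sub>R X3 b c p x
       + k4 *\<^sub>R X4 a b c p n x + k5 *\<^sub>R X5 b c p x + k6 *\<^sub>R X6 x"
    by (rule combination_iff_separated_form[OF b p adm, THEN iffD2])
  with adm show ?thesis by (rule that)
qed

lemma xi_comb_euler_equation:
  assumes adm: "admissible a b c p n k3 k4 k5 k6" and r: "0 < r"
  shows "xi_comb''' a b c p n k4 k5 r + (n - 1) / r * xi_comb'' a b c p n k4 k5 r = 0"
proof -
  have pw: "r powr (- n) = r powr (1 - n) / r" using r by (simp add: powr_diff powr_minus_divide)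
  have "k5 = 0 \<or> n = 2" using adm unfolding admissible_def cond5_def by auto
  then show ?thesis
    unfolding xi_comb'''_def xi_comb''_def pw using r by (auto simp: field_simps power2_eq_square)
qed

lemma degenerate_xi_comb_relation:
  assumes b: "b \<noteq> 0" and p: "p \<noteq> 0" and degenerate: "c * (1 - p) = 0"
    and adm: "admissible a b c p n k3 k4 k5 k6" and r: "0 < r"
  shows "(n - 1) * (xi_comb a b c p n k2 k3 k4 k5 r - r * xi_comb' a b c p n k2 k3 k4 k5 r)
    + (1 - 4 / p - 4 * a / (b * p)) * r^2 * xi_comb'' a b c p n k4 k5 r = 0"
proof -
  define K where "K = 1 - 4 / p - 4 * a / (b * p)"
  have A: "a + b + (1 - p) * c = a + b" using degenerate by (simp add: algebra_simps)
  have p2: "r powr (2 - n) = r * r powr (1 - n)" using powr_mult_base[of r "1 - n"] r by simp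
  have p3: "r powr (3 - n) = r * (r * r powr (1 - n))"
    using powr_mult_base[of r "2 - n"] r unfolding p2 by simp
  have "(n - 1) * (xi_comb a b c p n k2 k3 k4 k5 r - r * xi_comb' a b c p n k2 k3 k4 k5 r)
      + K * r^2 * xi_comb'' a b c p n k4 k5 r
      = k4 * (a + b) * (n - 2) * r^2 * r powr (1 - n) * ((n - 1) - K * (3 - n))
        + k5 * (p * b * r / 2) * (K - (n - 1))"
    unfolding xi_comb_def xi_comb'_def xi_comb''_def A p2 p3 using r
    by (simp add: field_simps power2_eq_square)
  moreover have "k4 = 0 \<or> K * (3 - n) = n - 1"
    using adm degenerate_cond4_iff[OF b p] unfolding admissible_def cond4_def A K_def by auto
  moreover have "k5 = 0 \<or> K = n - 1"
  proof (cases "k5 = 0")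
    case False
    then have "n = 2" "a = - b" using adm unfolding admissible_def cond5_def by auto
    then show ?thesis using degenerate_cond5_iff[OF b p] b unfolding K_def by simp
  qed simp
  ultimately show ?thesis unfolding K_def by auto
qed

lemma combination_smooth:
  assumes "\<forall>x\<in>Omega. X x = k1 *\<^sub>R X1 x + k2 *\<^sub>R X2 x + k3 *\<^sub>R X3 b c p x
       + k4 *\<^sub>R X4 a b c p n x + k5 *\<^sub>R X5 b c p x + k6 *\<^sub>R X6 x"
  shows "smooth_on Omega (vt X)" "smooth_on Omega (vr X)" "smooth_on Omega (vu X)"
proof -
  have comp: "vt X (t, r, u) = k1 + k2 * t + k6 * t^2" "vr X (t, r, u) = xi_comb a b c p n k2 k3 k4 k5 r"
    "vu X (t, r, u) = eta_comb a b c p n k3 k4 k5 k6 t r u" if "0 < r" "0 < u" for t r u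
    using assms that unfolding vt_def vr_def vu_def by (auto simp: combination_eq)
  have "elementary (\<lambda>x. k1 + k2 * fst x + k6 * (fst x * fst x))"
    by (intro elementary_add elementary_mult elementary_const elementary_t)
  then have "elementary (vt X)"
    by (rule elementary_cong) (intro ball_OmegaI, simp add: comp power2_eq_square)
  then show "smooth_on Omega (vt X)" by (rule smooth_on_elementary)
  have "elementary (\<lambda>x. (k2 + k3 * (p * b / 2)) * fst (snd x)
      + (k4 * (a + b + (1 - p) * c)) * fst (snd x) powr (3 - n)
      + (k5 * (p * b / 2)) * (fst (snd x) * ln (fst (snd x))))"
    by (intro elementary_add elementary_mult elementary_const elementary_r elementary_powr elementary_ln)
  then have "elementary (vr X)"
    by (rule elementary_cong) (intro ball_OmegaI, simp add: comp xi_comb_def algebra_simps)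
  then show "smooth_on Omega (vr X)" by (rule smooth_on_elementary)
  have "elementary (\<lambda>x. k3 * (b * snd (snd x) + p * c)
      + (k4 * (2 - n)) * (fst (snd x) powr (2 - n) * ((b + (1 - p) * c) * snd (snd x) + p * c))
      + k5 * ((1 + ln (fst (snd x))) * (b * snd (snd x) + p * c)) + k6 * (fst x * snd (snd x)))"
    by (intro elementary_add elementary_mult elementary_const elementary_t elementary_r elementary_u
        elementary_powr elementary_ln)
  then have "elementary (vu X)"
    by (rule elementary_cong) (intro ball_OmegaI, simp add: comp eta_comb_def algebra_simps)
  then show "smooth_on Omega (vu X)" by (rule smooth_on_elementary)
qed

lemma combination_is_point_symmetry:
  assumes b: "b \<noteq> 0" and p: "p \<noteq> 0" and adm: "admissible a b c p n k3 k4 k5 k6"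
    and comb: "\<forall>x\<in>Omega. X x = k1 *\<^sub>R X1 x + k2 *\<^sub>R X2 x + k3 *\<^sub>R X3 b c p x
       + k4 *\<^sub>R X4 a b c p n x + k5 *\<^sub>R X5 b c p x + k6 *\<^sub>R X6 x"
  shows "is_point_symmetry a b c p n X"
proof -
  let ?Q0 = "xi_comb a b c p n k2 k3 k4 k5" and ?Q1 = "xi_comb' a b c p n k2 k3 k4 k5"
    and ?Q2 = "xi_comb'' a b c p n k4 k5" and ?Q3 = "xi_comb''' a b c p n k4 k5"
  interpret separated_ansatz "\<lambda>t. k1 + k2 * t + k6 * t^2" "\<lambda>t. k2 + 2 * k6 * t" "\<lambda>t. 2 * k6" "\<lambda>t. 0"
    ?Q0 ?Q1 ?Q2 ?Q3
    by unfold_locales (auto intro!: derivative_eq_intros DERIV_xi_comb DERIV_xi_comb' DERIV_xi_comb'')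
  have sep: "has_separated_form b c p X (\<lambda>t. k1 + k2 * t + k6 * t^2) (\<lambda>t. k2 + 2 * k6 * t) ?Q0 ?Q1"
    using comb combination_iff_separated_form[OF b p adm] by blast
  have "\<forall>ut ur utr urr. prX_on_solutions a b c p n X t r u ut ur utr urr = 0" if r: "0 < r" and u: "0 < u"
    for t r u
  proof (cases "c * (1 - p) = 0")
    case degenerate: True
    note coeffs = degenerate_coefficients[OF degenerate b p r u]
    have "k6 = 0 \<or> p = -4" using adm unfolding admissible_def cond6_def by auto
    then have "(2 * u_profile' b c p u + 1) * (2 * k6) = 0" unfolding coeffs(1) by auto
    then show ?thesis
      unfolding separated_invariance_iff[OF sep b p r u] coeffs(2) coeffs(3)
      using xi_comb_euler_equation[OF adm r] degenerate_xi_comb_relation[OF b p degenerate adm r]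
        u_profile_degenerate(3)[OF degenerate u b]
      by simp
  next
    case generic: False
    then have "k3 = 0" "k4 = 0" "k5 = 0" "k6 = 0" using adm admissible_generic by blast+
    then show ?thesis
      unfolding separated_invariance_iff[OF sep b p r u]
      using r by (simp add: xi_comb_def xi_comb'_def xi_comb''_def xi_comb'''_def power2_eq_square)
  qed
  then show ?thesis
    unfolding is_point_symmetry_iff_prX_on_solutions using combination_smooth[OF comb] by blast
qed

section \<open>Commutators\<close>

lemma act_eq_derivative:
  assumes "(f has_derivative f') (at x)"
  shows "act X f x = f' (X x)"
proof -
  have lin: "linear f'" using assms has_derivative_linear by blast
  obtain v1 v2 v3 where X: "X x = (v1, v2, v3)" by (cases "X x") auto
  have "f' (X x) = f' (v1 *\<^sub>R (1, 0, 0) + v2 *\<^sub>R (0, 1, 0) + v3 *\<^sub>R (0, 0, 1))" by (simp add: X)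
  also have "\<dots> = v1 * f' (1, 0, 0) + v2 * f' (0, 1, 0) + v3 * f' (0, 0, 1)"
    by (simp only: linear_add[OF lin] linear_scale[OF lin]) simp
  finally show ?thesis
    unfolding act_def vt_def vr_def vu_def X partials_of_has_derivative[OF assms] by simp
qed

lemma bracket_eq_derivatives:
  assumes "(X has_derivative X') (at x)" "(Y has_derivative Y') (at x)"
  shows "bracket X Y x = Y' (X x) - X' (Y x)"
proof -
  have c: "(vt Z has_derivative (\<lambda>h. fst (Z' h))) (at x)"
    "(vr Z has_derivative (\<lambda>h. fst (snd (Z' h)))) (at x)"
    "(vu Z has_derivative (\<lambda>h. snd (snd (Z' h)))) (at x)"
    if "(Z has_derivative Z') (at x)" for Z Z'
    unfolding vt_def vr_def vu_def using that by (auto intro!: derivative_eq_intros)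
  show ?thesis
    unfolding bracket_def
    using act_eq_derivative[OF c(1)[OF assms(1)]] act_eq_derivative[OF c(1)[OF assms(2)]]
      act_eq_derivative[OF c(2)[OF assms(1)]] act_eq_derivative[OF c(2)[OF assms(2)]]
      act_eq_derivative[OF c(3)[OF assms(1)]] act_eq_derivative[OF c(3)[OF assms(2)]]
    by (simp add: prod_eq_iff)
qed

lemma has_derivative_X1: "(X1 has_derivative (\<lambda>h. 0)) (at x)"
  unfolding X1_def case_prod_unfold by (auto intro!: derivative_eq_intros simp: zero_prod_def)

lemma has_derivative_X2: "(X2 has_derivative (\<lambda>(ht, hr, hu). (ht, hr, 0))) (at x)"
  unfolding X2_def case_prod_unfold by (auto intro!: derivative_eq_intros)

lemma has_derivative_X3: "(X3 b c p has_derivative (\<lambda>(ht, hr, hu). (0, p * b / 2 * hr, b * hu))) (at x)"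
  unfolding X3_def case_prod_unfold by (auto intro!: derivative_eq_intros)

lemma has_derivative_X4:
  assumes "0 < r"
  shows "(X4 a b c p n has_derivative (\<lambda>(ht, hr, hu).
     (0, (a + b + (1 - p) * c) * (3 - n) * r powr (2 - n) * hr,
      (2 - n) * ((2 - n) * r powr (1 - n) * hr * ((b + (1 - p) * c) * u + p * c)
                 + r powr (2 - n) * (b + (1 - p) * c) * hu)))) (at (t, r, u))"
  unfolding X4_def case_prod_unfold using assms
  by (auto intro!: derivative_eq_intros simp: fun_eq_iff powr_diff field_simps power2_eq_square power3_eq_cube)

lemma has_derivative_X5:
  assumes "0 < r"
  shows "(X5 b c p has_derivative (\<lambda>(ht, hr, hu).
     (0, p * b / 2 * (ln r + 1) * hr, hr / r * (b * u + p * c) + (1 + ln r) * b * hu))) (at (t, r, u))"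
  unfolding X5_def case_prod_unfold using assms
  by (auto intro!: derivative_eq_intros simp: fun_eq_iff field_simps)

lemma has_derivative_X6: "(X6 has_derivative (\<lambda>(ht, hr, hu). (2 * t * ht, 0, u * ht + t * hu))) (at (t, r, u))"
  unfolding X6_def case_prod_unfold by (auto intro!: derivative_eq_intros simp: fun_eq_iff)

lemma bracket_X1_X2: "bracket X1 X2 x = X1 x"
  unfolding bracket_eq_derivatives[OF has_derivative_X1 has_derivative_X2] by (simp add: X1_def)

lemma bracket_X1_X3: "bracket X1 (X3 b c p) x = 0"
  unfolding bracket_eq_derivatives[OF has_derivative_X1 has_derivative_X3]
  by (simp add: X1_def zero_prod_def)

lemma bracket_X2_X3: "bracket X2 (X3 b c p) x = 0"
  unfolding bracket_eq_derivatives[OF has_derivative_X2 has_derivative_X3]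
  by (simp add: X2_def X3_def case_prod_unfold)

lemma bracket_X1_X4:
  assumes "0 < r"
  shows "bracket X1 (X4 a b c p n) (t, r, u) = 0"
  unfolding bracket_eq_derivatives[OF has_derivative_X1 has_derivative_X4[OF assms]]
  by (simp add: X1_def zero_prod_def)

lemma powr_shift:
  fixes r n :: real
  assumes "0 < r"
  shows "r powr (2 - n) = r * r powr (1 - n)" "r powr (3 - n) = r * (r * r powr (1 - n))"
  using powr_mult_base[of r "1 - n"] powr_mult_base[of r "2 - n"] assms by simp_all

lemma bracket_X2_X4:
  assumes "0 < r"
  shows "bracket X2 (X4 a b c p n) (t, r, u) = (2 - n) *\<^sub>R X4 a b c p n (t, r, u)"
  unfolding bracket_eq_derivatives[OF has_derivative_X2 has_derivative_X4[OF assms]]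
  using powr_shift[OF assms] by (simp add: X2_def X4_def algebra_simps)

lemma bracket_X3_X4:
  assumes "0 < r" and "c * (1 - p) = 0"
  shows "bracket (X3 b c p) (X4 a b c p n) (t, r, u) = (p * (1 - n / 2) * b) *\<^sub>R X4 a b c p n (t, r, u)"
  unfolding bracket_eq_derivatives[OF has_derivative_X3 has_derivative_X4[OF assms(1)]]
  using powr_shift[OF assms(1)] assms(2) by (cases "c = 0") (simp_all add: X3_def X4_def field_simps)

lemma bracket_X1_X5:
  assumes "0 < r"
  shows "bracket X1 (X5 b c p) (t, r, u) = 0"
  unfolding bracket_eq_derivatives[OF has_derivative_X1 has_derivative_X5[OF assms]]
  by (simp add: X1_def zero_prod_def)

lemma bracket_X2_X5:
  assumes "0 < r"
  shows "bracket X2 (X5 b c p) (t, r, u) = X3 b c p (t, r, u)"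
  unfolding bracket_eq_derivatives[OF has_derivative_X2 has_derivative_X5[OF assms]]
  using assms by (simp add: X2_def X3_def X5_def algebra_simps)

lemma bracket_X3_X5:
  assumes "0 < r"
  shows "bracket (X3 b c p) (X5 b c p) (t, r, u) = (p * b / 2) *\<^sub>R X3 b c p (t, r, u)"
  unfolding bracket_eq_derivatives[OF has_derivative_X3 has_derivative_X5[OF assms]]
  using assms by (simp add: X3_def X5_def algebra_simps)

lemma bracket_X1_X6:
  assumes "b \<noteq> 0" "c = 0" "p = -4"
  shows "bracket X1 X6 (t, r, u) = 2 *\<^sub>R X2 (t, r, u) + (1 / b) *\<^sub>R X3 b c p (t, r, u)"
  unfolding bracket_eq_derivatives[OF has_derivative_X1 has_derivative_X6]
  using assms by (simp add: X1_def X2_def X3_def)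

lemma bracket_X2_X6: "bracket X2 X6 (t, r, u) = X6 (t, r, u)"
  unfolding bracket_eq_derivatives[OF has_derivative_X2 has_derivative_X6]
  by (simp add: X2_def X6_def power2_eq_square)

lemma bracket_X3_X6: "c = 0 \<Longrightarrow> bracket (X3 b c p) X6 (t, r, u) = 0"
  unfolding bracket_eq_derivatives[OF has_derivative_X3 has_derivative_X6]
  by (simp add: X3_def X6_def zero_prod_def)

lemma bracket_X4_X6:
  assumes "0 < r" "c = 0"
  shows "bracket (X4 a b c p n) X6 (t, r, u) = 0"
  unfolding bracket_eq_derivatives[OF has_derivative_X4[OF assms(1)] has_derivative_X6]
  using assms by (simp add: X4_def X6_def algebra_simps)

lemma bracket_X5_X6:
  assumes "0 < r" "c = 0"
  shows "bracket (X5 b c p) X6 (t, r, u) = 0"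
  unfolding bracket_eq_derivatives[OF has_derivative_X5[OF assms(1)] has_derivative_X6]
  using assms by (simp add: X5_def X6_def algebra_simps)

theorem theorem1:
  fixes a b c p n :: real
  assumes hn: "n \<noteq> 1" and hp: "p \<noteq> 0" and hb: "b \<noteq> 0"
  shows
    "(\<forall>X. is_point_symmetry a b c p n X \<longleftrightarrow>
        (\<exists>k1 k2 k3 k4 k5 k6.
           (\<not> cond3 c p \<longrightarrow> k3 = 0) \<and> (\<not> cond4 a b c p n \<longrightarrow> k4 = 0) \<and>
           (\<not> cond5 a b c p n \<longrightarrow> k5 = 0) \<and> (\<not> cond6 c p \<longrightarrow> k6 = 0) \<and>
           (\<forall>x\<in>Omega. X x = k1 *\<^sub>R X1 x + k2 *\<^sub>R X2 x + k3 *\<^sub>R X3 b c p x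
                + k4 *\<^sub>R X4 a b c p n x + k5 *\<^sub>R X5 b c p x + k6 *\<^sub>R X6 x)))
     \<and> (c \<noteq> 0 \<and> p \<noteq> 1 \<longrightarrow>
          (\<forall>X. is_point_symmetry a b c p n X \<longleftrightarrow>
             (\<exists>k1 k2. \<forall>x\<in>Omega. X x = k1 *\<^sub>R X1 x + k2 *\<^sub>R X2 x)) \<and>
          (\<forall>k1 k2. (\<forall>x\<in>Omega. k1 *\<^sub>R X1 x + k2 *\<^sub>R X2 x = 0) \<longrightarrow> k1 = 0 \<and> k2 = 0))
     \<and> (\<forall>x\<in>Omega. bracket X1 X2 x = X1 x)
     \<and> (cond3 c p \<longrightarrow> (\<forall>x\<in>Omega. bracket X1 (X3 b c p) x = 0 \<and> bracket X2 (X3 b c p) x = 0))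
     \<and> (cond4 a b c p n \<longrightarrow> (\<forall>x\<in>Omega.
           bracket X1 (X4 a b c p n) x = 0 \<and>
           bracket X2 (X4 a b c p n) x = (2 - n) *\<^sub>R X4 a b c p n x \<and>
           bracket (X3 b c p) (X4 a b c p n) x = (p * (1 - n / 2) * b) *\<^sub>R X4 a b c p n x))
     \<and> (cond5 a b c p n \<longrightarrow> (\<forall>x\<in>Omega.
           bracket X1 (X5 b c p) x = 0 \<and>
           bracket X2 (X5 b c p) x = X3 b c p x \<and>
           bracket (X3 b c p) (X5 b c p) x = (p * b / 2) *\<^sub>R X3 b c p x))
     \<and> (cond6 c p \<longrightarrow> (\<forall>x\<in>Omega.
           bracket X1 X6 x = 2 *\<^sub>R X2 x + (1 / b) *\<^sub>R X3 b c p x \<and>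
           bracket X2 X6 x = X6 x \<and>
           bracket (X3 b c p) X6 x = 0))
     \<and> (cond4 a b c p n \<and> cond6 c p \<longrightarrow> (\<forall>x\<in>Omega. bracket (X4 a b c p n) X6 x = 0))
     \<and> (cond5 a b c p n \<and> cond6 c p \<longrightarrow> (\<forall>x\<in>Omega. bracket (X5 b c p) X6 x = 0))"
proof -
  have span: "is_point_symmetry a b c p n X \<longleftrightarrow> (\<exists>k1 k2 k3 k4 k5 k6. admissible a b c p n k3 k4 k5 k6 \<and>
      (\<forall>x\<in>Omega. X x = k1 *\<^sub>R X1 x + k2 *\<^sub>R X2 x + k3 *\<^sub>R X3 b c p x
         + k4 *\<^sub>R X4 a b c p n x + k5 *\<^sub>R X5 b c p x + k6 *\<^sub>R X6 x))" for X
    using point_symmetry_imp_combination[OF hn hb hp] combination_is_point_symmetry[OF hb hp] by metis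
  have independent: "k1 = 0 \<and> k2 = 0" if "\<forall>x\<in>Omega. k1 *\<^sub>R X1 x + k2 *\<^sub>R X2 x = 0" for k1 k2
    using that[rule_format, of "(0, 1, 1)"] by (simp add: X1_def X2_def zero_prod_def)
  have Omega: "x \<in> Omega \<Longrightarrow> \<exists>t r u. x = (t, r, u) \<and> 0 < r" for x
    unfolding Omega_def by auto
  show ?thesis
  proof (intro conjI impI allI span[unfolded admissible_def conj_assoc])
    fix X assume "c \<noteq> 0 \<and> p \<noteq> 1"
    then show "is_point_symmetry a b c p n X \<longleftrightarrow> (\<exists>k1 k2. \<forall>x\<in>Omega. X x = k1 *\<^sub>R X1 x + k2 *\<^sub>R X2 x)"
      unfolding span by (simp add: admissible_generic)
  qed (use hb independent Omega in \<open>auto simp: cond3_def cond4_def cond5_def cond6_def algebra_simps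
      bracket_X1_X2 bracket_X1_X3 bracket_X2_X3 bracket_X1_X4 bracket_X2_X4 bracket_X3_X4
      bracket_X1_X5 bracket_X2_X5 bracket_X3_X5 bracket_X1_X6 bracket_X2_X6 bracket_X3_X6
      bracket_X4_X6 bracket_X5_X6\<close>)
qed

end
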